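(* Let $\mathsf{C}$, $\Upsilon$ and $V_{\mathit{ub}}^\Upsilon$ be as in the context, with $K_{\mathit{ub}}=K$, and let $(s_1,b_1)\in S_B$ be a particle-based belief given by particles $s_E^1,\dots,s_E^{n_b}$ with weights $\kappa_1,\dots,\kappa_{n_b}$. Then: (1) $V_{\mathit{ub}}^\Upsilon(s_1,b_1)$ is the optimal value of the LP: minimise $\sum_{k\in I_{s_1}}\lambda_ky_k+\frac12(U-L)\sum_{s_E\in S_E^+}c_{s_E}$ subject to $c_{s_E}\ge|P(s_E;b_1)-\sum_{k\in I_{s_1}}\lambda_kP(s_E;b_1^k)|$ for $s_E\in S_E^+$, $\lambda_k\ge0$ and $\sum_{k\in I_{s_1}}\lambda_k=1$, where $S_E^+=\{s_E:P(s_E;b_1)+\sum_{k\in I_{s_1}}P(s_E;b_1^k)>0\}$. (2) $[TV_{\mathit{ub}}^\Upsilon](s_1,b_1)$ is the optimal value of the LP over variables $v$, $c^{a_1,s_1'}_{s_E'}$ ($(a_1,s_1')\in A_1\times S_1$, $s_E'\in S_E^{a_1,s_1'}$), $\lambda_k^{a_1,s_1'}$ ($(a_1,s_1')\in A_1\times S_1$, $k\in I_{s_1'}$), $p^{i}_{a_2}$ ($1\le i\le n_b$, $a_2\in A_2$): minimise $v$ subject to, for all $a_1\in A_1$, $s_1'\in S_1$, $s_E'\in S_E^{a_1,s_1'}$, $k\in I_{s_1'}$, $a_2\in A_2$, $1\le i\le n_b$: $v\ge\sum_{i=1}^{n_b}\sum_{a_2}\kappa_ip^i_{a_2}r((s_1,s_E^i),(a_1,a_2))+\beta\sum_{s_1'\in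 S_1}\sum_{k\in I_{s_1'}}\lambda_k^{a_1,s_1'}y_k+\frac12\beta(U-L)\sum_{s_1'\in S_1}\sum_{s_E'\in S_E^{a_1,s_1'}}c^{a_1,s_1'}_{s_E'}$; $c^{a_1,s_1'}_{s_E'}\ge\big|\sum_{i=1}^{n_b}\sum_{a_2}\kappa_ip^i_{a_2}\delta((s_1,s_E^i),(a_1,a_2))(s_1',s_E')-\sum_{k\in I_{s_1'}}\lambda_k^{a_1,s_1'}P(s_E';b_1^k)\big|$; $\sum_{k\in I_{s_1'}}\lambda_k^{a_1,s_1'}=\sum_{i=1}^{n_b}\sum_{a_2}\sum_{s_E''\in S_E}\kappa_ip^i_{a_2}\delta((s_1,s_E^i),(a_1,a_2))(s_1',s_E'')$; $\lambda_k^{a_1,s_1'}\ge0$, $p^i_{a_2}\ge0$, $\sum_{a_2\in A_2}p^i_{a_2}=1$; where $S_E^{a_1,s_1'}$ is the set of $s_E'\in S_E$ such that $\delta((s_1,s_E^i),(a_1,a_2))(s_1',s_E')>0$ for some $i$ and $a_2$, or $P(s_E';b_1^k)>0$ for some $k\in I_{s_1'}$.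
   Context: A one-sided NS-POSG $\mathsf{C}$ consists of: finite sets $\mathit{Loc}_1$, $\mathit{Per}_1$, $S_1=\mathit{Loc}_1\times\mathit{Per}_1$; a closed set $S_E\subseteq\mathbb{R}^e$; finite action sets $A_1,A_2$, $A=A_1\times A_2$; $\mathit{obs}_1:\mathit{Loc}_1\times S_E\to\mathit{Per}_1$ (arg-max of a ReLU NN classifier); $\delta_1:S_1\times A\to\mathbb{P}(\mathit{Loc}_1)$; finitely-branching $\delta_E:\mathit{Loc}_1\times S_E\times A\to\mathbb{P}(S_E)$. Semantics: the POSG with states $S$ = pairs $((\mathit{loc}_1,\mathit{per}_1),s_E)$ with $\mathit{per}_1=\mathit{obs}_1(\mathit{loc}_1,s_E)$, transition $\delta(((\mathit{loc}_1,\mathit{per}_1),s_E),a)(s_1',s_E')=\delta_1((\mathit{loc}_1,\mathit{per}_1),a)(\mathit{loc}_1')\delta_E(\mathit{loc}_1,s_E,a)(s_E')$; agent 1 observes only its agent state and own actions, agent 2 observes everything. Bounded reward $r:S\times A\to\mathbb{R}$, $\beta\in(0,1)$; agent 1 maximises, agent 2 minimises expected discounted reward. $L=\min r/(1-\beta)$, $U=\max r/(1-\beta)$. $S_E^{s_1}=\{s_E:\mathit{obs}_1(\mathit{loc}_1,s_E)=\mathit{per}_1\}$; $S_B$ = beliefs $(s_1,b_1)$ with $b_1\in\mathbb{P}(S_E)$ supported in $S_E^{s_1}$. A particle-based belief has $b_1$ a finitely supported distribution $\sum_{i=1}^{n_b}\kappa_i\,\mathrm{Dirac}(s_E^i)$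 (normalised weights $\kappa_i$); $P(s_E;b_1)$ denotes the probability of point $s_E$ under $b_1$. For particle-based beliefs, $K(b_1,b_1')=\frac12(U-L)\sum_{s_E:\,P(s_E;b_1)+P(s_E;b_1')>0}|P(s_E;b_1)-P(s_E;b_1')|$. Stage strategies $u_1\in\mathbb{P}(A_1)$, $u_2\in\mathbb{P}(A_2\mid S)$; $P(s_1'\mid(s_1,b_1),a_1,u_2)=\int b_1(s_E)\sum_{a_2}u_2(a_2\mid s_1,s_E)\sum_{s_E'}\delta((s_1,s_E),(a_1,a_2))(s_1',s_E')\,\mathrm{d}s_E$; $P(a_1,s_1'\mid(s_1,b_1),u_1,u_2)=u_1(a_1)P(s_1'\mid(s_1,b_1),a_1,u_2)$; updated belief $b_1^{s_1,a_1,u_2,s_1'}(s_E')=\big(\int b_1(s_E)\sum_{a_2}u_2(a_2\mid s_1,s_E)\delta((s_1,s_E),(a_1,a_2))(s_1',s_E')\,\mathrm{d}s_E\big)/P(s_1'\mid(s_1,b_1),a_1,u_2)$ on $S_E^{s_1'}$, $0$ elsewhere. Minimax operator: $[TV](s_1,b_1)=\max_{u_1}\min_{u_2}\big(\mathbb{E}_{(s_1,b_1),u_1,u_2}[r(s,a)]+\beta\sum_{(a_1,s_1')}P(a_1,s_1'\mid(s_1,b_1),u_1,u_2)V(s_1',b_1^{s_1,a_1,u_2,s_1'})\big)$ with $\mathbb{E}_{(s_1,b_1),u_1,u_2}[r(s,a)]=\int b_1(s_E)\sum_{(a_1,a_2)}u_1(a_1)u_2(a_2\mid s_1,s_E)r((s_1,s_E),(a_1,a_2))\,\mathrm{d}s_E$.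 Upper bound: $\Upsilon=\{((s_1^k,b_1^k),y_k):k\in I\}$ is a finite set of particle-based beliefs with real values; $I_{s_1}=\{k\in I:s_1^k=s_1\}$. For $(s_1,b_1)\in S_B$, $V_{\mathit{ub}}^\Upsilon(s_1,b_1)=\min\{\sum_{k\in I_{s_1}}\lambda_ky_k+K_{\mathit{ub}}(b_1,\sum_{k\in I_{s_1}}\lambda_kb_1^k):\lambda_k\ge0,\ \sum_{k\in I_{s_1}}\lambda_k=1\}$, here with $K_{\mathit{ub}}=K$. *)

theory Defs
  imports "HOL-Analysis.Analysis" "HOL-Probability.Probability"
begin

text \<open>Agent states are pairs (loc, per) :: 'loc \<times> 'per,
  environment states are points of (real^'d) lying in the closed set SE,
  beliefs over environment states are probability mass functions.\<close>

definition SE_of :: "(real^'d) set \<Rightarrow> ('loc \<Rightarrow> (real^'d) \<Rightarrow> 'per) \<Rightarrow> 'loc \<times> 'per \<Rightarrow> (real^'d) set" where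
  "SE_of SE obs s1 = {e \<in> SE. obs (fst s1) e = snd s1}"

definition states :: "(real^'d) set \<Rightarrow> ('loc \<Rightarrow> (real^'d) \<Rightarrow> 'per) \<Rightarrow> (('loc \<times> 'per) \<times> (real^'d)) set" where
  "states SE obs = {((l, p), e). e \<in> SE \<and> p = obs l e}"

definition deltaC :: "('loc \<Rightarrow> (real^'d) \<Rightarrow> 'per) \<Rightarrow> ('loc \<times> 'per \<Rightarrow> 'a \<Rightarrow> 'loc pmf)
    \<Rightarrow> ('loc \<Rightarrow> (real^'d) \<Rightarrow> 'a \<Rightarrow> (real^'d) pmf)
    \<Rightarrow> ('loc \<times> 'per) \<times> (real^'d) \<Rightarrow> 'a \<Rightarrow> 'loc \<times> 'per \<Rightarrow> (real^'d) \<Rightarrow> real" where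
  "deltaC obs d1 dE s a s1' e' =
     (if snd s1' = obs (fst s1') e'
      then pmf (d1 (fst s) a) (fst s1') * pmf (dE (fst (fst s)) (snd s) a) e'
      else 0)"

definition lowL :: "(('loc \<times> 'per) \<times> (real^'d)) set \<Rightarrow> (('loc \<times> 'per) \<times> (real^'d) \<Rightarrow> 'a \<Rightarrow> real) \<Rightarrow> real \<Rightarrow> real" where
  "lowL S r \<beta> = Inf (case_prod r ` (S \<times> UNIV)) / (1 - \<beta>)"

definition upU :: "(('loc \<times> 'per) \<times> (real^'d)) set \<Rightarrow> (('loc \<times> 'per) \<times> (real^'d) \<Rightarrow> 'a \<Rightarrow> real) \<Rightarrow> real \<Rightarrow> real" where
  "upU S r \<beta> = Sup (case_prod r ` (S \<times> UNIV)) / (1 - \<beta>)"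

definition Kdist :: "real \<Rightarrow> real \<Rightarrow> ('e \<Rightarrow> real) \<Rightarrow> ('e \<Rightarrow> real) \<Rightarrow> real" where
  "Kdist L U f g = (U - L) / 2 * (\<Sum>x\<in>{x. f x + g x > 0}. \<bar>f x - g x\<bar>)"

definition Iof :: "'k set \<Rightarrow> ('k \<Rightarrow> 's) \<Rightarrow> 's \<Rightarrow> 'k set" where
  "Iof I s1k s1 = {k \<in> I. s1k k = s1}"

text \<open>Upper bound V_ub^Upsilon(s1, b1), with K_ub = K; the belief b1 is given by its mass function.
  Upsilon = {((s1k k, bk k), y k) : k \<in> I}.\<close>
definition Vub :: "real \<Rightarrow> real \<Rightarrow> 'k set \<Rightarrow> ('k \<Rightarrow> 's) \<Rightarrow> ('k \<Rightarrow> 'e pmf) \<Rightarrow> ('k \<Rightarrow> real)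
    \<Rightarrow> 's \<Rightarrow> ('e \<Rightarrow> real) \<Rightarrow> real" where
  "Vub L U I s1k bk y s1 f =
     Inf {(\<Sum>k\<in>Iof I s1k s1. lam k * y k)
            + Kdist L U f (\<lambda>x. \<Sum>k\<in>Iof I s1k s1. lam k * pmf (bk k) x)
          | lam. (\<forall>k\<in>Iof I s1k s1. lam k \<ge> 0) \<and> (\<Sum>k\<in>Iof I s1k s1. lam k) = 1}"

definition Pnext :: "(real^'d) set \<Rightarrow> ('loc \<Rightarrow> (real^'d) \<Rightarrow> 'per) \<Rightarrow> ('loc \<times> 'per \<Rightarrow> 'a1 \<times> 'a2::finite \<Rightarrow> 'loc pmf)
    \<Rightarrow> ('loc \<Rightarrow> (real^'d) \<Rightarrow> 'a1 \<times> 'a2 \<Rightarrow> (real^'d) pmf)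
    \<Rightarrow> 'loc \<times> 'per \<Rightarrow> (real^'d) pmf \<Rightarrow> 'a1 \<Rightarrow> (('loc \<times> 'per) \<times> (real^'d) \<Rightarrow> 'a2 pmf) \<Rightarrow> 'loc \<times> 'per \<Rightarrow> real" where
  "Pnext SE obs d1 dE s1 b1 a1 u2 s1' =
     measure_pmf.expectation b1 (\<lambda>e. \<Sum>a2\<in>UNIV. pmf (u2 (s1, e)) a2 *
        (\<Sum>\<^sub>\<infinity>e'\<in>SE. deltaC obs d1 dE (s1, e) (a1, a2) s1' e'))"

definition bupd :: "(real^'d) set \<Rightarrow> ('loc \<Rightarrow> (real^'d) \<Rightarrow> 'per) \<Rightarrow> ('loc \<times> 'per \<Rightarrow> 'a1 \<times> 'a2::finite \<Rightarrow> 'loc pmf)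
    \<Rightarrow> ('loc \<Rightarrow> (real^'d) \<Rightarrow> 'a1 \<times> 'a2 \<Rightarrow> (real^'d) pmf)
    \<Rightarrow> 'loc \<times> 'per \<Rightarrow> (real^'d) pmf \<Rightarrow> 'a1 \<Rightarrow> (('loc \<times> 'per) \<times> (real^'d) \<Rightarrow> 'a2 pmf) \<Rightarrow> 'loc \<times> 'per
    \<Rightarrow> (real^'d) \<Rightarrow> real" where
  "bupd SE obs d1 dE s1 b1 a1 u2 s1' = (\<lambda>x.
     if x \<in> SE_of SE obs s1'
     then measure_pmf.expectation b1 (\<lambda>e. \<Sum>a2\<in>UNIV. pmf (u2 (s1, e)) a2 *
             deltaC obs d1 dE (s1, e) (a1, a2) s1' x)
          / Pnext SE obs d1 dE s1 b1 a1 u2 s1'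
     else 0)"

text \<open>Minimax operator [TV](s1, b1); max/min rendered as Sup/Inf over stage strategies.\<close>
definition Top :: "(real^'d) set \<Rightarrow> ('loc \<Rightarrow> (real^'d) \<Rightarrow> 'per) \<Rightarrow> ('loc \<times> 'per \<Rightarrow> 'a1::finite \<times> 'a2::finite \<Rightarrow> 'loc pmf)
    \<Rightarrow> ('loc \<Rightarrow> (real^'d) \<Rightarrow> 'a1 \<times> 'a2 \<Rightarrow> (real^'d) pmf)
    \<Rightarrow> (('loc \<times> 'per) \<times> (real^'d) \<Rightarrow> 'a1 \<times> 'a2 \<Rightarrow> real) \<Rightarrow> real
    \<Rightarrow> ('loc::finite \<times> 'per::finite \<Rightarrow> ((real^'d) \<Rightarrow> real) \<Rightarrow> real)
    \<Rightarrow> 'loc \<times> 'per \<Rightarrow> (real^'d) pmf \<Rightarrow> real" where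
  "Top SE obs d1 dE r \<beta> V s1 b1 =
     (SUP u1 \<in> (UNIV :: 'a1 pmf set). INF u2 \<in> (UNIV :: (('loc \<times> 'per) \<times> (real^'d) \<Rightarrow> 'a2 pmf) set).
        measure_pmf.expectation b1 (\<lambda>e. \<Sum>a\<in>UNIV. pmf u1 (fst a) * pmf (u2 (s1, e)) (snd a) * r (s1, e) a)
        + \<beta> * (\<Sum>a1\<in>UNIV. \<Sum>s1'\<in>UNIV. pmf u1 a1 * Pnext SE obs d1 dE s1 b1 a1 u2 s1'
                      * V s1' (bupd SE obs d1 dE s1 b1 a1 u2 s1')))"

end

theory Submission
  imports Defs
begin

(* The upper bound is the infimum of a linear function of the mixture weights plus a total
   variation distance; replacing each absolute value by an epigraph variable c_e does not change
   the infimum, which gives (1).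

   For (2), a stage strategy of agent 2 matters only through the mixed actions p_i it plays at the
   particles, and every family p_i arises this way. For fixed a1 and s1', the product
   P(s1' | ...) * V_ub(updated belief) is the value of the LP of (1) for the unnormalised successor
   belief, because that LP is positively homogeneous in the belief and its mass. So the payoff of a1
   against p is a function G(p, a1), convex in p, and [TV_ub](s1, b1) is
   sup_u1 inf_p sum_a1 u1(a1) G(p, a1). A minimax theorem for finitely many pure strategies (proved
   with a separating hyperplane) turns this into inf_p max_a1 G(p, a1), and the LP of (2) is this
   problem with the inner infima in G replaced by feasible points, which approximate them
   arbitrarily well. *)

section \<open>Infima and a minimax theorem\<close>

lemma cInf_eq_if_approximating:
  fixes A B :: "real set"
  assumes dominated: "\<And>a. a \<in> A \<Longrightarrow> \<exists>b\<in>B. b \<le> a"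
    and approximated: "\<And>b \<epsilon>. b \<in> B \<Longrightarrow> 0 < \<epsilon> \<Longrightarrow> \<exists>a\<in>A. a \<le> b + \<epsilon>"
    and bdd: "bdd_below B"
  shows "Inf A = Inf B"
proof (cases "B = {}")
  case True
  then show ?thesis using dominated by (metis equals0I empty_iff)
next
  case False
  then have "A \<noteq> {}" using approximated by (metis ex_in_conv zero_less_one)
  have bddA: "bdd_below A"
    using bdd dominated unfolding bdd_below_def by (meson order_trans)
  have "Inf B \<le> Inf A"
    using \<open>A \<noteq> {}\<close> bdd dominated by (meson cInf_greatest cInf_lower order_trans)
  moreover have "Inf A \<le> Inf B"
  proof (rule field_le_epsilon)
    fix \<epsilon> :: real assume "0 < \<epsilon>"
    then obtain b where "b \<in> B" "b < Inf B + \<epsilon> / 2"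
      using cInf_less_iff[OF False bdd] by (metis less_add_same_cancel1 half_gt_zero)
    moreover obtain a where "a \<in> A" "a \<le> b + \<epsilon> / 2"
      using approximated[OF \<open>b \<in> B\<close>] \<open>0 < \<epsilon>\<close> by (meson half_gt_zero)
    ultimately show "Inf A \<le> Inf B + \<epsilon>" using cInf_lower[OF _ bddA] by fastforce
  qed
  ultimately show ?thesis by simp
qed

lemma pmf_embed_pmf_finite:
  fixes w :: "'a::finite \<Rightarrow> real"
  assumes "\<And>a. 0 \<le> w a" and "(\<Sum>a\<in>UNIV. w a) = 1"
  shows "pmf (embed_pmf w) a = w a"
proof (rule pmf_embed_pmf)
  have "(\<integral>\<^sup>+ x. ennreal (w x) \<partial>count_space UNIV) = ennreal (\<Sum>x\<in>UNIV. w x)"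
    using assms(1) by (simp add: nn_integral_count_space_finite)
  then show "(\<integral>\<^sup>+ x. ennreal (w x) \<partial>count_space UNIV) = 1" using assms(2) by simp
qed (use assms in auto)

lemma sum_pmf_mult_const:
  fixes u :: "'a::finite pmf"
  shows "(\<Sum>a\<in>UNIV. pmf u a * c) = c"
  by (simp add: sum_distrib_right[symmetric] sum_pmf_eq_1)

lemma sum_pmf_mult_le_Max:
  fixes u :: "'a::finite pmf" and g :: "'a \<Rightarrow> real"
  shows "(\<Sum>a\<in>UNIV. pmf u a * g a) \<le> Max (range g)"
proof -
  have "(\<Sum>a\<in>UNIV. pmf u a * g a) \<le> (\<Sum>a\<in>UNIV. pmf u a * Max (range g))"
    by (intro sum_mono mult_left_mono) auto
  then show ?thesis by (simp only: sum_pmf_mult_const)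
qed

lemma sum_pmf_mult_ge:
  fixes u :: "'a::finite pmf" and g :: "'a \<Rightarrow> real"
  assumes "\<And>a. B \<le> g a"
  shows "B \<le> (\<Sum>a\<in>UNIV. pmf u a * g a)"
proof -
  have "(\<Sum>a\<in>UNIV. pmf u a * B) \<le> (\<Sum>a\<in>UNIV. pmf u a * g a)"
    using assms by (intro sum_mono mult_left_mono) auto
  then show ?thesis by (simp only: sum_pmf_mult_const)
qed

lemma nonneg_if_nonneg_on_strict_upper_orthant:
  fixes w x :: "real^'a::finite"
  assumes nonneg: "\<And>z. (\<forall>a. x$a < z$a) \<Longrightarrow> 0 \<le> inner w z"
  shows "\<forall>a. 0 \<le> w$a" and "0 \<le> inner w x"
proof -
  have shift: "inner w (x + d *\<^sub>R 1 + t *\<^sub>R axis b 1) = inner w x + d * sum (($) w) UNIV + t * w$b"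
    for d t b
  proof -
    have "inner w 1 = sum (($) w) UNIV" by (simp add: inner_vec_def)
    then show ?thesis by (simp add: inner_add_right inner_axis)
  qed
  show "\<forall>a. 0 \<le> w$a"
  proof
    fix b
    define c where "c = inner w x + sum (($) w) UNIV"
    have "0 \<le> c + t * w$b" if "0 \<le> t" for t
      using nonneg[of "x + 1 *\<^sub>R 1 + t *\<^sub>R axis b 1"] that shift[of 1 t b]
      by (auto simp: c_def axis_def)
    show "0 \<le> w$b"
    proof (rule ccontr)
      assume "\<not> 0 \<le> w$b"
      then have "0 \<le> (\<bar>c\<bar> + 1) / - w$b" and "(\<bar>c\<bar> + 1) / - w$b * w$b = - (\<bar>c\<bar> + 1)"
        by (simp_all add: divide_nonneg_neg)
      with \<open>\<And>t. 0 \<le> t \<Longrightarrow> 0 \<le> c + t * w$b\<close> show False by fastforce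
    qed
  qed
  then have s: "0 \<le> sum (($) w) UNIV" by (simp add: sum_nonneg)
  show "0 \<le> inner w x"
  proof (rule field_le_epsilon[of 0, simplified])
    fix \<epsilon> :: real assume "0 < \<epsilon>"
    define d where "d = \<epsilon> / (sum (($) w) UNIV + 1)"
    have "0 < d" "d * sum (($) w) UNIV \<le> \<epsilon>"
      using \<open>0 < \<epsilon>\<close> s by (auto simp: d_def field_simps)
    moreover have "0 \<le> inner w x + d * sum (($) w) UNIV"
      using nonneg[of "x + d *\<^sub>R 1 + 0 *\<^sub>R axis undefined 1"] shift[of d 0] \<open>0 < d\<close> by auto
    ultimately show "0 \<le> inner w x + \<epsilon>" by linarith
  qed
qed

lemma convex_strict_upper_set:
  fixes P :: "('a::finite \<Rightarrow> real) set"
  assumes conv: "\<And>g h \<theta>. g \<in> P \<Longrightarrow> h \<in> P \<Longrightarrow> 0 \<le> \<theta> \<Longrightarrow> \<theta> \<le> 1 \<Longrightarrow>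
                   \<exists>f\<in>P. \<forall>a. f a \<le> \<theta> * g a + (1 - \<theta>) * h a"
  shows "convex {z::real^'a. \<exists>g\<in>P. \<forall>a. g a < z$a}"
  unfolding convex_def
proof (intro ballI allI impI)
  fix x z :: "real^'a" and u v :: real
  assume "x \<in> {z. \<exists>g\<in>P. \<forall>a. g a < z$a}" "z \<in> {z. \<exists>g\<in>P. \<forall>a. g a < z$a}"
    and uv: "0 \<le> u" "0 \<le> v" "u + v = 1"
  then obtain g h where g: "g \<in> P" "\<forall>a. g a < x$a" and h: "h \<in> P" "\<forall>a. h a < z$a" by blast
  have "v = 1 - u" using uv by simp
  then obtain f where "f \<in> P" and f: "\<forall>a. f a \<le> u * g a + v * h a"
    using conv[OF g(1) h(1), of u] uv by auto
  have "u * g a + v * h a < u * x$a + v * z$a" for a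
  proof (cases "u = 0")
    case True then show ?thesis using uv h by simp
  next
    case False
    then have "u * g a < u * x$a" using uv g by simp
    moreover have "v * h a \<le> v * z$a" using uv h by (simp add: less_imp_le mult_left_mono)
    ultimately show ?thesis by simp
  qed
  with f \<open>f \<in> P\<close> show "u *\<^sub>R x + v *\<^sub>R z \<in> {z. \<exists>g\<in>P. \<forall>a. g a < z$a}"
    by (auto intro: order.strict_trans1)
qed

lemma exists_nonneg_separating_vector:
  fixes P :: "('a::finite \<Rightarrow> real) set"
  assumes "P \<noteq> {}"
    and conv: "\<And>g h \<theta>. g \<in> P \<Longrightarrow> h \<in> P \<Longrightarrow> 0 \<le> \<theta> \<Longrightarrow> \<theta> \<le> 1 \<Longrightarrow>
                 \<exists>f\<in>P. \<forall>a. f a \<le> \<theta> * g a + (1 - \<theta>) * h a"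
    and T: "\<And>g. g \<in> P \<Longrightarrow> T \<le> Max (range g)"
  shows "\<exists>w::real^'a. w \<noteq> 0 \<and> (\<forall>a. 0 \<le> w$a) \<and> (\<forall>g\<in>P. 0 \<le> inner w (\<chi> a. g a - T))"
proof -
  define S where "S = (+) (- T *\<^sub>R 1) ` {z::real^'a. \<exists>g\<in>P. \<forall>a. g a < z$a}"
  have "convex S"
    unfolding S_def by (intro convex_translation convex_strict_upper_set conv)
  moreover have "0 \<notin> S"
  proof
    assume "0 \<in> S"
    then obtain g where "g \<in> P" "\<forall>a. g a < T" by (auto simp: S_def)
    moreover have "Max (range g) \<in> range g" by (rule Max_in) auto
    ultimately show False using T by (metis imageE not_le)
  qed
  ultimately obtain w where "w \<noteq> 0" and w: "\<forall>x\<in>S. 0 \<le> inner w x"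
    using separating_hyperplane_set_0 by blast
  have above: "0 \<le> inner w z" if "g \<in> P" "\<forall>a. (\<chi> a. g a - T)$a < z$a" for g z
  proof -
    have "\<forall>a. g a < (z + T *\<^sub>R 1)$a" using that(2) by (simp add: diff_less_eq)
    then have "z + T *\<^sub>R 1 \<in> {z. \<exists>g\<in>P. \<forall>a. g a < z$a}" using that(1) by blast
    then have "z \<in> S" unfolding S_def by (rule rev_image_eqI) simp
    then show ?thesis using w by blast
  qed
  obtain g0 where "g0 \<in> P" using \<open>P \<noteq> {}\<close> by blast
  have "\<forall>a. 0 \<le> w$a"
    by (rule nonneg_if_nonneg_on_strict_upper_orthant(1)[OF above[OF \<open>g0 \<in> P\<close>]])
  moreover have "0 \<le> inner w (\<chi> a. g a - T)" if "g \<in> P" for g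
    by (rule nonneg_if_nonneg_on_strict_upper_orthant(2)[OF above[OF that]])
  ultimately show ?thesis using \<open>w \<noteq> 0\<close> by blast
qed

lemma exists_mixed_strategy_guaranteeing:
  fixes P :: "('a::finite \<Rightarrow> real) set"
  assumes "P \<noteq> {}"
    and conv: "\<And>g h \<theta>. g \<in> P \<Longrightarrow> h \<in> P \<Longrightarrow> 0 \<le> \<theta> \<Longrightarrow> \<theta> \<le> 1 \<Longrightarrow>
                 \<exists>f\<in>P. \<forall>a. f a \<le> \<theta> * g a + (1 - \<theta>) * h a"
    and T: "\<And>g. g \<in> P \<Longrightarrow> T \<le> Max (range g)"
  shows "\<exists>u. \<forall>g\<in>P. T \<le> (\<Sum>a\<in>UNIV. pmf u a * g a)"
proof -
  obtain w :: "real^'a" where "w \<noteq> 0" and w_nonneg: "\<forall>a. 0 \<le> w$a"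
    and w: "\<forall>g\<in>P. 0 \<le> inner w (\<chi> a. g a - T)"
    using exists_nonneg_separating_vector[OF assms] by blast
  define s where "s = (\<Sum>a\<in>UNIV. w$a)"
  have "0 < s"
  proof -
    obtain b where "w$b \<noteq> 0" using \<open>w \<noteq> 0\<close> by (metis vec_eq_iff zero_index)
    then have "0 < w$b" using w_nonneg by (simp add: order_le_neq_trans)
    then show ?thesis unfolding s_def using w_nonneg by (metis UNIV_I finite sum_pos2)
  qed
  define u where "u = embed_pmf (\<lambda>a. w$a / s)"
  have pmf_u: "pmf u a = w$a / s" for a
    unfolding u_def using w_nonneg \<open>0 < s\<close>
    by (intro pmf_embed_pmf_finite) (simp_all add: s_def sum_divide_distrib[symmetric])
  have "T \<le> (\<Sum>a\<in>UNIV. pmf u a * g a)" if "g \<in> P" for g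
  proof -
    have "T * s \<le> (\<Sum>a\<in>UNIV. w$a * g a)"
      using w that by (simp add: inner_vec_def s_def algebra_simps sum_subtractf sum_distrib_left)
    then show ?thesis
      using \<open>0 < s\<close> by (simp add: pmf_u pos_le_divide_eq sum_divide_distrib[symmetric] mult.commute)
  qed
  then show ?thesis by blast
qed

lemma SUP_mixed_INF_eq_INF_Max:
  fixes P :: "('a::finite \<Rightarrow> real) set"
  assumes "P \<noteq> {}"
    and conv: "\<And>g h \<theta>. g \<in> P \<Longrightarrow> h \<in> P \<Longrightarrow> 0 \<le> \<theta> \<Longrightarrow> \<theta> \<le> 1 \<Longrightarrow>
                 \<exists>f\<in>P. \<forall>a. f a \<le> \<theta> * g a + (1 - \<theta>) * h a"
    and lower: "\<And>g a. g \<in> P \<Longrightarrow> B \<le> g a"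
  shows "(SUP u. INF g\<in>P. \<Sum>a\<in>UNIV. pmf u a * g a) = (INF g\<in>P. Max (range g))"
proof (rule antisym)
  define T where "T = (INF g\<in>P. Max (range g))"
  have bdd: "bdd_below ((\<lambda>g. \<Sum>a\<in>UNIV. pmf u a * g a) ` P)" for u
    using lower by (intro bdd_belowI2[where m = B] sum_pmf_mult_ge) auto
  have le_T: "(INF g\<in>P. \<Sum>a\<in>UNIV. pmf u a * g a) \<le> T" for u
    unfolding T_def using \<open>P \<noteq> {}\<close> bdd sum_pmf_mult_le_Max by (intro cINF_mono) auto
  then show "(SUP u. INF g\<in>P. \<Sum>a\<in>UNIV. pmf u a * g a) \<le> T"
    by (intro cSUP_least) auto
  have "T \<le> Max (range g)" if "g \<in> P" for g
    unfolding T_def using that lower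
    by (intro cINF_lower bdd_belowI2[where m = B]) (auto simp: Max_ge_iff)
  then obtain u where "\<forall>g\<in>P. T \<le> (\<Sum>a\<in>UNIV. pmf u a * g a)"
    using exists_mixed_strategy_guaranteeing[OF \<open>P \<noteq> {}\<close> conv] by blast
  then have "T \<le> (INF g\<in>P. \<Sum>a\<in>UNIV. pmf u a * g a)"
    using \<open>P \<noteq> {}\<close> by (intro cINF_greatest) auto
  also have "\<dots> \<le> (SUP u. INF g\<in>P. \<Sum>a\<in>UNIV. pmf u a * g a)"
    using le_T by (intro cSUP_upper bdd_aboveI2[where M = T]) auto
  finally show "T \<le> (SUP u. INF g\<in>P. \<Sum>a\<in>UNIV. pmf u a * g a)" .
qed

section \<open>The linear program of the upper bound\<close>

definition ub_lp_feasible :: "'k set \<Rightarrow> ('k \<Rightarrow> 'e pmf) \<Rightarrow> 'e set \<Rightarrow> ('e \<Rightarrow> real) \<Rightarrow> real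
    \<Rightarrow> ('k \<Rightarrow> real) \<Rightarrow> ('e \<Rightarrow> real) \<Rightarrow> bool" where
  "ub_lp_feasible J bk S m M lam c \<longleftrightarrow>
     (\<forall>e\<in>S. c e \<ge> \<bar>m e - (\<Sum>k\<in>J. lam k * pmf (bk k) e)\<bar>) \<and> (\<forall>k\<in>J. lam k \<ge> 0) \<and> (\<Sum>k\<in>J. lam k) = M"

text \<open>The LP of part (1) for a belief m of arbitrary mass M; for M > 0 its value is M times the
  upper bound at m / M.\<close>

definition ub_lp_values :: "real \<Rightarrow> 'k set \<Rightarrow> ('k \<Rightarrow> real) \<Rightarrow> ('k \<Rightarrow> 'e pmf) \<Rightarrow> 'e set
    \<Rightarrow> ('e \<Rightarrow> real) \<Rightarrow> real \<Rightarrow> real set" where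
  "ub_lp_values W J y bk S m M =
     {(\<Sum>k\<in>J. lam k * y k) + W * (\<Sum>e\<in>S. c e) | lam c. ub_lp_feasible J bk S m M lam c}"

lemma ub_lp_valuesI:
  "ub_lp_feasible J bk S m M lam c \<Longrightarrow>
     (\<Sum>k\<in>J. lam k * y k) + W * (\<Sum>e\<in>S. c e) \<in> ub_lp_values W J y bk S m M"
  unfolding ub_lp_values_def by blast

lemma ub_lp_values_ge:
  assumes "finite J" "0 \<le> W" "x \<in> ub_lp_values W J y bk S m M"
  shows "- M * (\<Sum>k\<in>J. \<bar>y k\<bar>) \<le> x"
proof -
  obtain lam c where x: "x = (\<Sum>k\<in>J. lam k * y k) + W * (\<Sum>e\<in>S. c e)"
    and feas: "ub_lp_feasible J bk S m M lam c"
    using assms(3) unfolding ub_lp_values_def by blast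
  have "0 \<le> (\<Sum>e\<in>S. c e)"
    using feas unfolding ub_lp_feasible_def by (intro sum_nonneg) (meson abs_ge_zero order_trans)
  then have "0 \<le> W * (\<Sum>e\<in>S. c e)" using assms(2) by simp
  moreover have "- (lam k * (\<Sum>j\<in>J. \<bar>y j\<bar>)) \<le> lam k * y k" if "k \<in> J" for k
  proof -
    have "\<bar>y k\<bar> \<le> (\<Sum>j\<in>J. \<bar>y j\<bar>)" using that assms(1) by (intro member_le_sum) auto
    moreover have "0 \<le> lam k" using feas that unfolding ub_lp_feasible_def by blast
    ultimately show ?thesis
      by (metis abs_ge_minus_self abs_mult abs_of_nonneg minus_le_iff mult_left_mono order_trans)
  qed
  then have "(\<Sum>k\<in>J. - (lam k * (\<Sum>j\<in>J. \<bar>y j\<bar>))) \<le> (\<Sum>k\<in>J. lam k * y k)"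
    by (rule sum_mono)
  moreover have "(\<Sum>k\<in>J. - (lam k * (\<Sum>j\<in>J. \<bar>y j\<bar>))) = - M * (\<Sum>k\<in>J. \<bar>y k\<bar>)"
    using feas unfolding ub_lp_feasible_def by (simp add: sum_negf sum_distrib_right[symmetric])
  ultimately show ?thesis using x by linarith
qed

lemma bdd_below_ub_lp_values: "finite J \<Longrightarrow> 0 \<le> W \<Longrightarrow> bdd_below (ub_lp_values W J y bk S m M)"
  by (rule bdd_belowI[where m = "- M * (\<Sum>k\<in>J. \<bar>y k\<bar>)"]) (rule ub_lp_values_ge)

lemma ub_lp_values_nonempty:
  assumes "finite J" "0 \<le> M" "J \<noteq> {} \<or> M = 0"
  shows "ub_lp_values W J y bk S m M \<noteq> {}"
proof -
  obtain lam :: "_ \<Rightarrow> real" where "\<forall>k\<in>J. 0 \<le> lam k" "(\<Sum>k\<in>J. lam k) = M"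
  proof (cases "M = 0")
    case True
    then show ?thesis using that[of "\<lambda>k. 0"] by simp
  next
    case False
    then obtain k0 where "k0 \<in> J" using assms(3) by auto
    then show ?thesis using that[of "\<lambda>k. if k = k0 then M else 0"] assms(1,2) by simp
  qed
  then have "ub_lp_feasible J bk S m M lam (\<lambda>e. \<bar>m e - (\<Sum>k\<in>J. lam k * pmf (bk k) e)\<bar>)"
    unfolding ub_lp_feasible_def by simp
  then show ?thesis using ub_lp_valuesI by blast
qed

lemma Inf_ub_lp_values_zero:
  assumes "finite J" "0 \<le> W" "\<forall>e\<in>S. m e = 0"
  shows "Inf (ub_lp_values W J y bk S m 0) = 0"
proof (rule cInf_eq_minimum)
  have "ub_lp_feasible J bk S m 0 (\<lambda>k. 0) (\<lambda>e. 0)"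
    using assms(3) unfolding ub_lp_feasible_def by simp
  from ub_lp_valuesI[OF this] show "0 \<in> ub_lp_values W J y bk S m 0" by simp
qed (use ub_lp_values_ge[OF assms(1,2)] in fastforce)

lemma ub_lp_feasible_scale:
  assumes "0 < M"
  shows "ub_lp_feasible J bk S (\<lambda>e. M * m e) (M * M') (\<lambda>k. M * lam k) (\<lambda>e. M * c e)
     \<longleftrightarrow> ub_lp_feasible J bk S m M' lam c"
proof -
  have "\<bar>M * m e - (\<Sum>k\<in>J. M * lam k * pmf (bk k) e)\<bar> = M * \<bar>m e - (\<Sum>k\<in>J. lam k * pmf (bk k) e)\<bar>" for e
    using assms by (simp add: mult.assoc sum_distrib_left[symmetric] right_diff_distrib[symmetric] abs_mult)
  then show ?thesis
    using assms by (simp add: ub_lp_feasible_def sum_distrib_left[symmetric] zero_le_mult_iff)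
qed

lemma ub_lp_values_scale:
  assumes "0 < M"
  shows "ub_lp_values W J y bk S m M = (\<lambda>x. M * x) ` ub_lp_values W J y bk S (\<lambda>e. m e / M) 1"
proof -
  have obj: "(\<Sum>k\<in>J. M * lam k * y k) + W * (\<Sum>e\<in>S. M * c e)
      = M * ((\<Sum>k\<in>J. lam k * y k) + W * (\<Sum>e\<in>S. c e))" for lam c
    by (simp add: sum_distrib_left algebra_simps)
  have feas: "ub_lp_feasible J bk S m M (\<lambda>k. M * lam k) (\<lambda>e. M * c e)
      \<longleftrightarrow> ub_lp_feasible J bk S (\<lambda>e. m e / M) 1 lam c" for lam c
    using ub_lp_feasible_scale[OF assms, of J bk S "\<lambda>e. m e / M" 1 lam c] assms by simp
  show ?thesis
  proof (intro set_eqI iffI)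
    fix x assume "x \<in> ub_lp_values W J y bk S m M"
    then obtain lam c where x: "x = (\<Sum>k\<in>J. lam k * y k) + W * (\<Sum>e\<in>S. c e)"
      and "ub_lp_feasible J bk S m M lam c" unfolding ub_lp_values_def by blast
    then have "x = M * ((\<Sum>k\<in>J. lam k / M * y k) + W * (\<Sum>e\<in>S. c e / M))"
      and "ub_lp_feasible J bk S (\<lambda>e. m e / M) 1 (\<lambda>k. lam k / M) (\<lambda>e. c e / M)"
      using obj[of "\<lambda>k. lam k / M" "\<lambda>e. c e / M"] feas[of "\<lambda>k. lam k / M" "\<lambda>e. c e / M"] assms
      by simp_all
    then show "x \<in> (\<lambda>x. M * x) ` ub_lp_values W J y bk S (\<lambda>e. m e / M) 1"
      by (rule image_eqI[OF _ ub_lp_valuesI])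
  next
    fix x assume "x \<in> (\<lambda>x. M * x) ` ub_lp_values W J y bk S (\<lambda>e. m e / M) 1"
    then obtain lam c where "x = M * ((\<Sum>k\<in>J. lam k * y k) + W * (\<Sum>e\<in>S. c e))"
      and "ub_lp_feasible J bk S (\<lambda>e. m e / M) 1 lam c" unfolding ub_lp_values_def by blast
    then show "x \<in> ub_lp_values W J y bk S m M"
      by (simp only: obj[symmetric] feas[symmetric] ub_lp_valuesI)
  qed
qed

lemma Inf_ub_lp_values_scale:
  assumes "0 < M" "finite J" "J \<noteq> {}" "0 \<le> W"
  shows "Inf (ub_lp_values W J y bk S m M) = M * Inf (ub_lp_values W J y bk S (\<lambda>e. m e / M) 1)"
  unfolding ub_lp_values_scale[OF assms(1)] image_image
proof (rule continuous_at_Inf_mono[symmetric])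
  show "mono ((*) M)" using assms(1) by (simp add: mono_def)
  show "continuous (at_right (Inf (ub_lp_values W J y bk S (\<lambda>e. m e / M) 1))) ((*) M)"
    by (rule continuous_mult_left[OF continuous_ident])
  show "ub_lp_values W J y bk S (\<lambda>e. m e / M) 1 \<noteq> {}"
    using assms(2,3) by (intro ub_lp_values_nonempty) auto
qed (rule bdd_below_ub_lp_values[OF assms(2,4)])

lemma ub_lp_feasible_convex_comb:
  assumes "ub_lp_feasible J bk S m1 M1 lam1 c1" "ub_lp_feasible J bk S m2 M2 lam2 c2"
    and "0 \<le> \<theta>" "\<theta> \<le> 1"
  shows "ub_lp_feasible J bk S (\<lambda>e. \<theta> * m1 e + (1 - \<theta>) * m2 e) (\<theta> * M1 + (1 - \<theta>) * M2)
           (\<lambda>k. \<theta> * lam1 k + (1 - \<theta>) * lam2 k) (\<lambda>e. \<theta> * c1 e + (1 - \<theta>) * c2 e)"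
proof -
  have "\<bar>(\<theta> * m1 e + (1 - \<theta>) * m2 e) - (\<Sum>k\<in>J. (\<theta> * lam1 k + (1 - \<theta>) * lam2 k) * pmf (bk k) e)\<bar>
      \<le> \<theta> * c1 e + (1 - \<theta>) * c2 e" if "e \<in> S" for e
  proof -
    have "(\<theta> * m1 e + (1 - \<theta>) * m2 e) - (\<Sum>k\<in>J. (\<theta> * lam1 k + (1 - \<theta>) * lam2 k) * pmf (bk k) e)
        = \<theta> * (m1 e - (\<Sum>k\<in>J. lam1 k * pmf (bk k) e)) + (1 - \<theta>) * (m2 e - (\<Sum>k\<in>J. lam2 k * pmf (bk k) e))"
    proof -
      have "(\<Sum>k\<in>J. (\<theta> * lam1 k + (1 - \<theta>) * lam2 k) * pmf (bk k) e)
          = \<theta> * (\<Sum>k\<in>J. lam1 k * pmf (bk k) e) + (1 - \<theta>) * (\<Sum>k\<in>J. lam2 k * pmf (bk k) e)"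
        by (simp add: distrib_right sum.distrib sum_distrib_left mult.assoc)
      then show ?thesis by (simp add: algebra_simps)
    qed
    also have "\<bar>\<dots>\<bar> \<le> \<theta> * c1 e + (1 - \<theta>) * c2 e"
      using assms that unfolding ub_lp_feasible_def
      by (intro order_trans[OF abs_triangle_ineq] add_mono)
         (auto simp: abs_mult intro!: mult_left_mono)
    finally show ?thesis .
  qed
  then show ?thesis
    using assms unfolding ub_lp_feasible_def by (auto simp: sum.distrib sum_distrib_left[symmetric])
qed

lemma cInf_le_convex_comb:
  fixes X Y Z :: "real set"
  assumes "Y \<noteq> {}" "Z \<noteq> {}" "bdd_below X" "bdd_below Y" "bdd_below Z" "0 \<le> \<theta>" "\<theta> \<le> 1"
    and comb: "\<And>y z. y \<in> Y \<Longrightarrow> z \<in> Z \<Longrightarrow> \<theta> * y + (1 - \<theta>) * z \<in> X"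
  shows "Inf X \<le> \<theta> * Inf Y + (1 - \<theta>) * Inf Z"
proof (rule field_le_epsilon)
  fix \<epsilon> :: real assume "0 < \<epsilon>"
  obtain y z where "y \<in> Y" "y < Inf Y + \<epsilon>" "z \<in> Z" "z < Inf Z + \<epsilon>"
    using assms(1,2,4,5) \<open>0 < \<epsilon>\<close> by (meson cInf_less_iff less_add_same_cancel1)
  then have "Inf X \<le> \<theta> * y + (1 - \<theta>) * z"
    using cInf_lower[OF comb assms(3)] by blast
  also have "\<dots> \<le> \<theta> * (Inf Y + \<epsilon>) + (1 - \<theta>) * (Inf Z + \<epsilon>)"
    using \<open>y < _\<close> \<open>z < _\<close> assms(6,7) by (intro add_mono mult_left_mono) auto
  finally show "Inf X \<le> \<theta> * Inf Y + (1 - \<theta>) * Inf Z + \<epsilon>" by (simp add: algebra_simps)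
qed

lemma Inf_ub_lp_values_convex:
  assumes "finite J" "0 \<le> W" "0 \<le> \<theta>" "\<theta> \<le> 1"
    and "ub_lp_values W J y bk S m1 M1 \<noteq> {}" "ub_lp_values W J y bk S m2 M2 \<noteq> {}"
  shows "Inf (ub_lp_values W J y bk S (\<lambda>e. \<theta> * m1 e + (1 - \<theta>) * m2 e) (\<theta> * M1 + (1 - \<theta>) * M2))
         \<le> \<theta> * Inf (ub_lp_values W J y bk S m1 M1) + (1 - \<theta>) * Inf (ub_lp_values W J y bk S m2 M2)"
proof (rule cInf_le_convex_comb[OF assms(5,6) bdd_below_ub_lp_values bdd_below_ub_lp_values
      bdd_below_ub_lp_values assms(3,4)])
  fix x1 x2
  assume "x1 \<in> ub_lp_values W J y bk S m1 M1" "x2 \<in> ub_lp_values W J y bk S m2 M2"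
  then obtain lam1 c1 lam2 c2
    where x1: "x1 = (\<Sum>k\<in>J. lam1 k * y k) + W * (\<Sum>e\<in>S. c1 e)" "ub_lp_feasible J bk S m1 M1 lam1 c1"
      and x2: "x2 = (\<Sum>k\<in>J. lam2 k * y k) + W * (\<Sum>e\<in>S. c2 e)" "ub_lp_feasible J bk S m2 M2 lam2 c2"
    unfolding ub_lp_values_def by blast
  have "\<theta> * x1 + (1 - \<theta>) * x2
      = (\<Sum>k\<in>J. (\<theta> * lam1 k + (1 - \<theta>) * lam2 k) * y k) + W * (\<Sum>e\<in>S. \<theta> * c1 e + (1 - \<theta>) * c2 e)"
    unfolding x1(1) x2(1)
    by (simp add: distrib_right distrib_left sum.distrib sum_distrib_left mult.assoc mult.left_commute)
  then show "\<theta> * x1 + (1 - \<theta>) * x2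
      \<in> ub_lp_values W J y bk S (\<lambda>e. \<theta> * m1 e + (1 - \<theta>) * m2 e) (\<theta> * M1 + (1 - \<theta>) * M2)"
    using ub_lp_valuesI[OF ub_lp_feasible_convex_comb[OF x1(2) x2(2) assms(3,4)]] by simp
qed (use assms(1,2) in auto)

lemma Kdist_eq_sum:
  assumes "finite S" "\<And>x. 0 \<le> f x" "\<And>x. 0 \<le> g x" "\<And>x. x \<notin> S \<Longrightarrow> f x = 0 \<and> g x = 0"
  shows "Kdist L U f g = (U - L) / 2 * (\<Sum>x\<in>S. \<bar>f x - g x\<bar>)"
proof -
  have "(\<Sum>x\<in>{x. f x + g x > 0}. \<bar>f x - g x\<bar>) = (\<Sum>x\<in>S. \<bar>f x - g x\<bar>)"
  proof (rule sum.mono_neutral_left[OF assms(1)])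
    show "{x. f x + g x > 0} \<subseteq> S" using assms(4) by force
    show "\<forall>x\<in>S - {x. f x + g x > 0}. \<bar>f x - g x\<bar> = 0"
    proof
      fix x assume "x \<in> S - {x. f x + g x > 0}"
      then have "f x = 0" "g x = 0" using assms(2,3)[of x] by auto
      then show "\<bar>f x - g x\<bar> = 0" by simp
    qed
  qed
  then show ?thesis unfolding Kdist_def by simp
qed

lemma Vub_eq_Inf_ub_lp_values:
  assumes "finite S" "finite (Iof I s1k s)" "L \<le> U"
    and "\<And>x. 0 \<le> f x" "\<And>x. x \<notin> S \<Longrightarrow> f x = 0"
    and "\<And>k x. k \<in> Iof I s1k s \<Longrightarrow> x \<notin> S \<Longrightarrow> pmf (bk k) x = 0"
  shows "Vub L U I s1k bk y s f = Inf (ub_lp_values ((U - L) / 2) (Iof I s1k s) y bk S f 1)"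
  unfolding Vub_def
proof (rule cInf_eq_if_approximating)
  let ?J = "Iof I s1k s" and ?W = "(U - L) / 2"
  have K: "Kdist L U f (\<lambda>x. \<Sum>k\<in>?J. lam k * pmf (bk k) x)
        = ?W * (\<Sum>x\<in>S. \<bar>f x - (\<Sum>k\<in>?J. lam k * pmf (bk k) x)\<bar>)"
    if "\<forall>k\<in>?J. 0 \<le> lam k" for lam
    using that assms by (intro Kdist_eq_sum) (auto intro!: sum_nonneg)
  show "\<exists>b\<in>ub_lp_values ?W ?J y bk S f 1. b \<le> a"
    if a_mem: "a \<in> {(\<Sum>k\<in>?J. lam k * y k) + Kdist L U f (\<lambda>x. \<Sum>k\<in>?J. lam k * pmf (bk k) x) | lam.
             (\<forall>k\<in>?J. lam k \<ge> 0) \<and> (\<Sum>k\<in>?J. lam k) = 1}" for a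
  proof -
    obtain lam where a: "a = (\<Sum>k\<in>?J. lam k * y k) + Kdist L U f (\<lambda>x. \<Sum>k\<in>?J. lam k * pmf (bk k) x)"
      and lam: "\<forall>k\<in>?J. lam k \<ge> 0" "(\<Sum>k\<in>?J. lam k) = 1"
      using a_mem by blast
    have "ub_lp_feasible ?J bk S f 1 lam (\<lambda>x. \<bar>f x - (\<Sum>k\<in>?J. lam k * pmf (bk k) x)\<bar>)"
      using lam unfolding ub_lp_feasible_def by simp
    from ub_lp_valuesI[OF this] show ?thesis unfolding a K[OF lam(1)] by blast
  qed
  show "\<exists>a\<in>{(\<Sum>k\<in>?J. lam k * y k) + Kdist L U f (\<lambda>x. \<Sum>k\<in>?J. lam k * pmf (bk k) x) | lam.
             (\<forall>k\<in>?J. lam k \<ge> 0) \<and> (\<Sum>k\<in>?J. lam k) = 1}. a \<le> b + \<epsilon>"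
    if b_mem: "b \<in> ub_lp_values ?W ?J y bk S f 1" and "0 < \<epsilon>" for b \<epsilon>
  proof -
    obtain lam c where b: "b = (\<Sum>k\<in>?J. lam k * y k) + ?W * (\<Sum>e\<in>S. c e)"
      and feas: "ub_lp_feasible ?J bk S f 1 lam c"
      using b_mem unfolding ub_lp_values_def by blast
    then have "(\<Sum>x\<in>S. \<bar>f x - (\<Sum>k\<in>?J. lam k * pmf (bk k) x)\<bar>) \<le> (\<Sum>e\<in>S. c e)"
      unfolding ub_lp_feasible_def by (intro sum_mono) auto
    moreover have lam: "\<forall>k\<in>?J. 0 \<le> lam k" using feas unfolding ub_lp_feasible_def by blast
    ultimately have "Kdist L U f (\<lambda>x. \<Sum>k\<in>?J. lam k * pmf (bk k) x) \<le> ?W * (\<Sum>e\<in>S. c e)"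
      unfolding K[OF lam] using assms(3) by (intro mult_left_mono) auto
    then have "(\<Sum>k\<in>?J. lam k * y k) + Kdist L U f (\<lambda>x. \<Sum>k\<in>?J. lam k * pmf (bk k) x) \<le> b + \<epsilon>"
      using b \<open>0 < \<epsilon>\<close> by linarith
    then show ?thesis using feas unfolding ub_lp_feasible_def by blast
  qed
qed (rule bdd_below_ub_lp_values, use assms(2,3) in auto)

section \<open>Particle sums\<close>

definition particle_strategies :: "nat \<Rightarrow> (nat \<Rightarrow> 'a::finite \<Rightarrow> real) set" where
  "particle_strategies nb =
     {p. (\<forall>i\<in>{1..nb}. \<forall>a. p i a \<ge> 0) \<and> (\<forall>i\<in>{1..nb}. (\<Sum>a\<in>UNIV. p i a) = 1)}"

definition particle_sum :: "nat \<Rightarrow> (nat \<Rightarrow> real) \<Rightarrow> (nat \<Rightarrow> 'e) \<Rightarrow> (nat \<Rightarrow> 'a::finite \<Rightarrow> real)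
    \<Rightarrow> ('e \<Rightarrow> 'a \<Rightarrow> real) \<Rightarrow> real" where
  "particle_sum nb \<kappa> sE p \<Phi> = (\<Sum>i=1..nb. \<Sum>a\<in>UNIV. \<kappa> i * p i a * \<Phi> (sE i) a)"

lemma pmf_in_particle_strategies: "(\<lambda>i a. pmf (q i) a) \<in> particle_strategies nb"
  unfolding particle_strategies_def by (simp add: sum_pmf_eq_1)

lemma particle_strategies_convex_comb:
  assumes "p \<in> particle_strategies nb" "q \<in> particle_strategies nb" "0 \<le> \<theta>" "\<theta> \<le> 1"
  shows "(\<lambda>i a. \<theta> * p i a + (1 - \<theta>) * q i a) \<in> particle_strategies nb"
  using assms unfolding particle_strategies_def by (simp add: sum.distrib sum_distrib_left[symmetric])

lemma particle_sum_nonneg: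
  assumes "p \<in> particle_strategies nb" "\<forall>i\<in>{1..nb}. 0 \<le> \<kappa> i" "\<forall>i\<in>{1..nb}. \<forall>a. 0 \<le> \<Phi> (sE i) a"
  shows "0 \<le> particle_sum nb \<kappa> sE p \<Phi>"
  using assms unfolding particle_sum_def particle_strategies_def by (auto intro!: sum_nonneg)

lemma particle_sum_abs_le:
  assumes "p \<in> particle_strategies nb" "\<forall>i\<in>{1..nb}. 0 \<le> \<kappa> i"
  shows "\<bar>particle_sum nb \<kappa> sE p \<Phi>\<bar> \<le> (\<Sum>i=1..nb. \<Sum>a\<in>UNIV. \<kappa> i * \<bar>\<Phi> (sE i) a\<bar>)"
  unfolding particle_sum_def
proof (intro order_trans[OF sum_abs] sum_mono order_trans[OF sum_abs])
  fix i a assume "i \<in> {1..nb}"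
  then have "0 \<le> p i a" "p i a \<le> 1" "0 \<le> \<kappa> i"
    using assms member_le_sum[of a UNIV "p i"] unfolding particle_strategies_def by auto
  then show "\<bar>\<kappa> i * p i a * \<Phi> (sE i) a\<bar> \<le> \<kappa> i * \<bar>\<Phi> (sE i) a\<bar>"
    by (simp add: abs_mult mult_left_le_one_le mult.assoc mult_left_mono)
qed

lemma particle_sum_convex_comb:
  "particle_sum nb \<kappa> sE (\<lambda>i a. \<theta> * p i a + (1 - \<theta>) * q i a) \<Phi>
     = \<theta> * particle_sum nb \<kappa> sE p \<Phi> + (1 - \<theta>) * particle_sum nb \<kappa> sE q \<Phi>"
  unfolding particle_sum_def
  by (simp add: distrib_left distrib_right sum.distrib sum_distrib_left mult.assoc mult.left_commute)

lemma particle_sum_sum: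
  "particle_sum nb \<kappa> sE p (\<lambda>e a. \<Sum>x\<in>S. \<Phi> x e a) = (\<Sum>x\<in>S. particle_sum nb \<kappa> sE p (\<Phi> x))"
  unfolding particle_sum_def by (simp add: sum_distrib_left sum.swap[of _ S])

text \<open>Agent 2 sees the environment state, not the particle, so particles sharing a state must play
  alike; this loses nothing, as particle sums only depend on the weight each state gives to each
  action.\<close>

lemma particle_sum_cong_state_weights:
  assumes "\<And>e a. (\<Sum>i\<in>{i\<in>{1..nb}. sE i = e}. \<kappa> i * p i a) = (\<Sum>i\<in>{i\<in>{1..nb}. sE i = e}. \<kappa> i * q i a)"
  shows "particle_sum nb \<kappa> sE p \<Phi> = particle_sum nb \<kappa> sE q \<Phi>"
proof -
  have by_state: "(\<Sum>i=1..nb. \<kappa> i * p' i a * \<Phi> (sE i) a)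
      = (\<Sum>e\<in>sE ` {1..nb}. \<Phi> e a * (\<Sum>i\<in>{i\<in>{1..nb}. sE i = e}. \<kappa> i * p' i a))" for p' a
    by (subst sum.image_gen[of "{1..nb}" _ sE]) (auto simp: sum_distrib_left mult_ac intro!: sum.cong)
  have "particle_sum nb \<kappa> sE p' \<Phi>
      = (\<Sum>a\<in>UNIV. \<Sum>e\<in>sE ` {1..nb}. \<Phi> e a * (\<Sum>i\<in>{i\<in>{1..nb}. sE i = e}. \<kappa> i * p' i a))" for p'
    unfolding particle_sum_def by (subst sum.swap) (simp only: by_state)
  then show ?thesis by (simp only: assms)
qed

lemma exists_state_strategy_with_same_particle_sums:
  fixes p :: "nat \<Rightarrow> 'a::finite \<Rightarrow> real"
  assumes p: "p \<in> particle_strategies nb" and \<kappa>: "\<forall>i\<in>{1..nb}. 0 < \<kappa> i"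
  shows "\<exists>q :: 'e \<Rightarrow> 'a pmf. \<forall>\<Phi>. particle_sum nb \<kappa> sE (\<lambda>i a. pmf (q (sE i)) a) \<Phi> = particle_sum nb \<kappa> sE p \<Phi>"
proof -
  define idx where "idx e = {i\<in>{1..nb}. sE i = e}" for e
  define wt where "wt e = (\<Sum>i\<in>idx e. \<kappa> i)" for e
  define w where "w e a = (if idx e = {} then 1 / real CARD('a) else (\<Sum>i\<in>idx e. \<kappa> i * p i a) / wt e)" for e a
  have wt_pos: "0 < wt e" if "idx e \<noteq> {}" for e
    using that \<kappa> unfolding wt_def idx_def by (intro sum_pos) auto
  have w_nonneg: "0 \<le> w e a" for e a
  proof -
    have "0 \<le> (\<Sum>i\<in>idx e. \<kappa> i * p i a)"
      using p \<kappa> unfolding idx_def particle_strategies_def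
      by (auto intro!: sum_nonneg mult_nonneg_nonneg simp: less_imp_le)
    then show ?thesis using wt_pos[of e] by (simp add: w_def less_imp_le)
  qed
  have w_sum: "(\<Sum>a\<in>UNIV. w e a) = 1" for e
  proof (cases "idx e = {}")
    case False
    have "(\<Sum>a\<in>UNIV. \<Sum>i\<in>idx e. \<kappa> i * p i a) = (\<Sum>i\<in>idx e. \<kappa> i * (\<Sum>a\<in>UNIV. p i a))"
      by (simp add: sum.swap[of _ UNIV] sum_distrib_left)
    also have "\<dots> = wt e" unfolding wt_def using p unfolding particle_strategies_def idx_def by simp
    finally show ?thesis
      using False wt_pos[OF False] by (simp add: w_def sum_divide_distrib[symmetric])
  qed (simp add: w_def)
  define q where "q e = embed_pmf (w e)" for e
  have "particle_sum nb \<kappa> sE (\<lambda>i a. pmf (q (sE i)) a) \<Phi> = particle_sum nb \<kappa> sE p \<Phi>" for \<Phi>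
  proof (rule particle_sum_cong_state_weights)
    fix e a
    have "(\<Sum>i\<in>idx e. \<kappa> i * pmf (q (sE i)) a) = wt e * w e a"
      unfolding q_def pmf_embed_pmf_finite[OF w_nonneg w_sum] wt_def sum_distrib_right
      by (simp add: idx_def)
    also have "\<dots> = (\<Sum>i\<in>idx e. \<kappa> i * p i a)"
    proof (cases "idx e = {}")
      case False
      then show ?thesis using wt_pos[OF False] by (simp add: w_def)
    qed (simp add: wt_def)
    finally show "(\<Sum>i\<in>{i\<in>{1..nb}. sE i = e}. \<kappa> i * pmf (q (sE i)) a) = (\<Sum>i\<in>{i\<in>{1..nb}. sE i = e}. \<kappa> i * p i a)"
      unfolding idx_def .
  qed
  then show ?thesis by blast
qed

section \<open>The stage game at a particle-based belief\<close>

lemma deltaC_nonneg: "0 \<le> deltaC obs d1 dE s a s1' e'"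
  unfolding deltaC_def by simp

lemma deltaC_nonzeroD:
  "deltaC obs d1 dE s a s1' e' \<noteq> 0 \<Longrightarrow>
     snd s1' = obs (fst s1') e' \<and> e' \<in> set_pmf (dE (fst (fst s)) (snd s) a)"
  unfolding deltaC_def by (auto split: if_splits simp: set_pmf_iff)

locale particle_belief_game =
  fixes SE :: "(real^'d) set"
    and obs :: "'loc::finite \<Rightarrow> (real^'d) \<Rightarrow> 'per::finite"
    and d1 :: "'loc \<times> 'per \<Rightarrow> 'a1::finite \<times> 'a2::finite \<Rightarrow> 'loc pmf"
    and dE :: "'loc \<Rightarrow> (real^'d) \<Rightarrow> 'a1 \<times> 'a2 \<Rightarrow> (real^'d) pmf"
    and r :: "('loc \<times> 'per) \<times> (real^'d) \<Rightarrow> 'a1 \<times> 'a2 \<Rightarrow> real"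
    and \<beta> :: real
    and I :: "'k set" and s1k :: "'k \<Rightarrow> 'loc \<times> 'per" and bk :: "'k \<Rightarrow> (real^'d) pmf"
    and y :: "'k \<Rightarrow> real"
    and s1 :: "'loc \<times> 'per" and b1 :: "(real^'d) pmf"
    and nb :: nat and sE :: "nat \<Rightarrow> (real^'d)" and \<kappa> :: "nat \<Rightarrow> real"
  assumes dE_fin: "\<And>l e a. e \<in> SE \<Longrightarrow> finite (set_pmf (dE l e a)) \<and> set_pmf (dE l e a) \<subseteq> SE"
    and r_bounded: "bounded (case_prod r ` (states SE obs \<times> UNIV))"
    and \<beta>_pos: "0 < \<beta>" and \<beta>_lt1: "\<beta> < 1"
    and I_fin: "finite I"
    and Ups_beliefs: "\<And>k. k \<in> I \<Longrightarrow> finite (set_pmf (bk k)) \<and> set_pmf (bk k) \<subseteq> SE_of SE obs (s1k k)"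
    and Ups_cover: "\<And>s. SE_of SE obs s \<noteq> {} \<Longrightarrow> Iof I s1k s \<noteq> {}"
    and particles: "\<And>i. i \<in> {1..nb} \<Longrightarrow> 0 < \<kappa> i \<and> sE i \<in> SE"
    and b1_particles: "\<And>x. pmf b1 x = (\<Sum>i\<in>{i\<in>{1..nb}. sE i = x}. \<kappa> i)"
    and b1_belief: "set_pmf b1 \<subseteq> SE_of SE obs s1"
begin

abbreviation "L \<equiv> lowL (states SE obs) r \<beta>"
abbreviation "U \<equiv> upU (states SE obs) r \<beta>"
abbreviation "W \<equiv> (U - L) / 2"
abbreviation "\<delta> \<equiv> deltaC obs d1 dE"
abbreviation "Is \<equiv> Iof I s1k"
abbreviation "V \<equiv> Vub L U I s1k bk y"

lemma finite_Is: "finite (Is s)"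
  unfolding Iof_def using I_fin by simp

lemma set_pmf_b1: "set_pmf b1 = sE ` {1..nb}"
proof -
  have "pmf b1 x \<noteq> 0 \<longleftrightarrow> {i\<in>{1..nb}. sE i = x} \<noteq> {}" for x
    unfolding b1_particles using particles by (subst sum_nonneg_eq_0_iff) (force simp: less_imp_le)+
  then show ?thesis by (auto simp: set_pmf_iff)
qed

lemma expectation_b1: "measure_pmf.expectation b1 f = (\<Sum>i=1..nb. \<kappa> i * f (sE i))"
proof -
  have "measure_pmf.expectation b1 f = (\<Sum>x\<in>sE ` {1..nb}. f x * pmf b1 x)"
    by (rule integral_measure_pmf_real) (auto simp: set_pmf_b1)
  also have "\<dots> = (\<Sum>x\<in>sE ` {1..nb}. \<Sum>i\<in>{i\<in>{1..nb}. sE i = x}. \<kappa> i * f (sE i))"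
    unfolding b1_particles by (intro sum.cong refl) (auto simp: sum_distrib_left mult.commute)
  also have "\<dots> = (\<Sum>i=1..nb. \<kappa> i * f (sE i))"
    by (rule sum.image_gen[symmetric]) simp
  finally show ?thesis .
qed

lemma L_le_U: "L \<le> U"
proof -
  obtain e where "e \<in> set_pmf b1" using set_pmf_not_empty[of b1] by blast
  then have "(s1, e) \<in> states SE obs"
    using b1_belief unfolding SE_of_def states_def by (cases s1) auto
  then have "case_prod r ` (states SE obs \<times> UNIV) \<noteq> {}" by blast
  then have "Inf (case_prod r ` (states SE obs \<times> UNIV)) \<le> Sup (case_prod r ` (states SE obs \<times> UNIV))"
    using r_bounded by (intro cInf_le_cSup bounded_imp_bdd_above bounded_imp_bdd_below)
  then show ?thesis unfolding lowL_def upU_def using \<beta>_lt1 by (intro divide_right_mono) auto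
qed

lemma W_nonneg: "0 \<le> W"
  using L_le_U by simp

definition succ_support :: "'a1 \<Rightarrow> 'loc \<times> 'per \<Rightarrow> (real^'d) set" where
  "succ_support a1 s1' = {e' \<in> SE. (\<exists>i\<in>{1..nb}. \<exists>a2. \<delta> (s1, sE i) (a1, a2) s1' e' > 0)
                                  \<or> (\<exists>k\<in>Is s1'. pmf (bk k) e' > 0)}"

text \<open>When agent 2 plays the mixed action p i at particle i, succ_mass p a1 s1' is the updated
  belief b1^{s1,a1,u2,s1'} scaled by P(s1' | (s1, b1), a1, u2), and succ_prob p a1 s1' is that
  probability.\<close>

definition succ_mass :: "(nat \<Rightarrow> 'a2 \<Rightarrow> real) \<Rightarrow> 'a1 \<Rightarrow> 'loc \<times> 'per \<Rightarrow> real^'d \<Rightarrow> real" where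
  "succ_mass p a1 s1' e' = particle_sum nb \<kappa> sE p (\<lambda>e a2. \<delta> (s1, e) (a1, a2) s1' e')"

definition succ_prob :: "(nat \<Rightarrow> 'a2 \<Rightarrow> real) \<Rightarrow> 'a1 \<Rightarrow> 'loc \<times> 'per \<Rightarrow> real" where
  "succ_prob p a1 s1' = (\<Sum>e'\<in>succ_support a1 s1'. succ_mass p a1 s1' e')"

definition succ_value :: "(nat \<Rightarrow> 'a2 \<Rightarrow> real) \<Rightarrow> 'a1 \<Rightarrow> 'loc \<times> 'per \<Rightarrow> real" where
  "succ_value p a1 s1' =
     Inf (ub_lp_values W (Is s1') y bk (succ_support a1 s1') (succ_mass p a1 s1') (succ_prob p a1 s1'))"

lemma particle_deltaC_nonzeroD:
  assumes "i \<in> {1..nb}" "\<delta> (s1, sE i) a s1' e' \<noteq> 0"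
  shows "e' \<in> SE_of SE obs s1'"
proof -
  have "snd s1' = obs (fst s1') e'" "e' \<in> set_pmf (dE (fst s1) (sE i) a)"
    using deltaC_nonzeroD[OF assms(2)] by auto
  moreover have "set_pmf (dE (fst s1) (sE i) a) \<subseteq> SE" using dE_fin particles[OF assms(1)] by blast
  ultimately show ?thesis unfolding SE_of_def by auto
qed

lemma particle_deltaC_nonzero_in_succ_support:
  assumes "i \<in> {1..nb}" "\<delta> (s1, sE i) (a1, a2) s1' e' \<noteq> 0"
  shows "e' \<in> succ_support a1 s1'"
proof -
  have "e' \<in> SE" using particle_deltaC_nonzeroD[OF assms] unfolding SE_of_def by blast
  moreover have "0 < \<delta> (s1, sE i) (a1, a2) s1' e'"
    using assms(2) deltaC_nonneg[of obs d1 dE "(s1, sE i)" "(a1, a2)" s1' e'] by linarith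
  ultimately show ?thesis using assms(1) unfolding succ_support_def by blast
qed

lemma pmf_bk_nonzero_in_succ_support:
  assumes "k \<in> Is s1'" "pmf (bk k) e' \<noteq> 0"
  shows "e' \<in> succ_support a1 s1'"
proof -
  have "k \<in> I" "e' \<in> set_pmf (bk k)" using assms unfolding Iof_def by (auto simp: set_pmf_iff)
  then have "e' \<in> SE" using Ups_beliefs unfolding SE_of_def by blast
  moreover have "0 < pmf (bk k) e'" using assms(2) pmf_nonneg[of "bk k" e'] by linarith
  ultimately show ?thesis using assms(1) unfolding succ_support_def by blast
qed

lemma finite_succ_support: "finite (succ_support a1 s1')"
proof (rule finite_subset)
  show "succ_support a1 s1'
      \<subseteq> (\<Union>i\<in>{1..nb}. \<Union>a2. set_pmf (dE (fst s1) (sE i) (a1, a2))) \<union> (\<Union>k\<in>Is s1'. set_pmf (bk k))"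
  proof
    fix e' assume "e' \<in> succ_support a1 s1'"
    then consider (particle) i a2 where "i \<in> {1..nb}" "\<delta> (s1, sE i) (a1, a2) s1' e' \<noteq> 0"
      | (belief) k where "k \<in> Is s1'" "pmf (bk k) e' \<noteq> 0"
      unfolding succ_support_def by force
    then show "e' \<in> (\<Union>i\<in>{1..nb}. \<Union>a2. set_pmf (dE (fst s1) (sE i) (a1, a2))) \<union> (\<Union>k\<in>Is s1'. set_pmf (bk k))"
      by cases (auto dest!: deltaC_nonzeroD simp: set_pmf_iff)
  qed
  show "finite ((\<Union>i\<in>{1..nb}. \<Union>a2. set_pmf (dE (fst s1) (sE i) (a1, a2))) \<union> (\<Union>k\<in>Is s1'. set_pmf (bk k)))"
  proof (intro finite_UnI finite_UN_I finite_Is)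
    show "finite (set_pmf (dE (fst s1) (sE i) (a1, a2)))" if "i \<in> {1..nb}" for i a2
      using dE_fin particles[OF that] by blast
    show "finite (set_pmf (bk k))" if "k \<in> Is s1'" for k
      using Ups_beliefs that unfolding Iof_def by blast
  qed simp_all
qed

lemma infsum_particle_deltaC:
  assumes "i \<in> {1..nb}"
  shows "(\<Sum>\<^sub>\<infinity>e'\<in>SE. c * \<delta> (s1, sE i) (a1, a2) s1' e') = (\<Sum>e'\<in>succ_support a1 s1'. c * \<delta> (s1, sE i) (a1, a2) s1' e')"
proof (rule infsumI, rule has_sum_finite_neutralI[OF finite_succ_support])
  show "succ_support a1 s1' \<subseteq> SE" unfolding succ_support_def by blast
  show "c * \<delta> (s1, sE i) (a1, a2) s1' e' = 0" if "e' \<in> SE - succ_support a1 s1'" for e'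
    using particle_deltaC_nonzero_in_succ_support[OF assms, of a1 a2 s1' e'] that by auto
qed simp

lemma succ_mass_eq_0:
  assumes "e' \<notin> succ_support a1 s1'"
  shows "succ_mass p a1 s1' e' = 0"
proof -
  have "\<delta> (s1, sE i) (a1, a2) s1' e' = 0" if "i \<in> {1..nb}" for i a2
    using particle_deltaC_nonzero_in_succ_support[OF that] assms by blast
  then show ?thesis by (simp add: succ_mass_def particle_sum_def)
qed

lemma succ_mass_nonneg: "p \<in> particle_strategies nb \<Longrightarrow> 0 \<le> succ_mass p a1 s1' e'"
  unfolding succ_mass_def
  by (intro particle_sum_nonneg ballI allI deltaC_nonneg) (simp_all add: particles less_imp_le)

lemma succ_prob_nonneg: "p \<in> particle_strategies nb \<Longrightarrow> 0 \<le> succ_prob p a1 s1'"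
  unfolding succ_prob_def by (intro sum_nonneg succ_mass_nonneg)

lemma Is_nonempty_if_succ_prob_nonzero:
  assumes "succ_prob p a1 s1' \<noteq> 0"
  shows "Is s1' \<noteq> {}"
proof
  assume "Is s1' = {}"
  then have "SE_of SE obs s1' = {}" using Ups_cover by blast
  then have "\<delta> (s1, sE i) (a1, a2) s1' e' = 0" if "i \<in> {1..nb}" for i a2 e'
    using particle_deltaC_nonzeroD[OF that] by blast
  then have "succ_mass p a1 s1' e' = 0" for e'
    by (simp add: succ_mass_def particle_sum_def)
  then show False using assms unfolding succ_prob_def by simp
qed

lemma succ_value_lp_nonempty:
  assumes "p \<in> particle_strategies nb"
  shows "ub_lp_values W (Is s1') y bk (succ_support a1 s1') (succ_mass p a1 s1') (succ_prob p a1 s1') \<noteq> {}"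
proof (rule ub_lp_values_nonempty[OF finite_Is])
  show "0 \<le> succ_prob p a1 s1'" using assms by (rule succ_prob_nonneg)
  show "Is s1' \<noteq> {} \<or> succ_prob p a1 s1' = 0" using Is_nonempty_if_succ_prob_nonzero by blast
qed

lemma pmf_bk_eq_0_outside_succ_support:
  "k \<in> Is s1' \<Longrightarrow> e' \<notin> succ_support a1 s1' \<Longrightarrow> pmf (bk k) e' = 0"
  using pmf_bk_nonzero_in_succ_support by blast

definition particle_strategy :: "(('loc \<times> 'per) \<times> (real^'d) \<Rightarrow> 'a2 pmf) \<Rightarrow> nat \<Rightarrow> 'a2 \<Rightarrow> real" where
  "particle_strategy u2 = (\<lambda>i a2. pmf (u2 (s1, sE i)) a2)"

lemma particle_strategy_in_particle_strategies: "particle_strategy u2 \<in> particle_strategies nb"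
  unfolding particle_strategy_def by (rule pmf_in_particle_strategies)

lemma Pnext_eq_succ_prob: "Pnext SE obs d1 dE s1 b1 a1 u2 s1' = succ_prob (particle_strategy u2) a1 s1'"
proof -
  have "Pnext SE obs d1 dE s1 b1 a1 u2 s1' = (\<Sum>i=1..nb. \<kappa> i * (\<Sum>a2\<in>UNIV. pmf (u2 (s1, sE i)) a2 *
      (\<Sum>e'\<in>succ_support a1 s1'. \<delta> (s1, sE i) (a1, a2) s1' e')))"
    unfolding Pnext_def expectation_b1
    by (intro sum.cong refl) (simp add: infsum_particle_deltaC[where c = 1, simplified])
  also have "\<dots> = particle_sum nb \<kappa> sE (particle_strategy u2)
      (\<lambda>e a2. \<Sum>e'\<in>succ_support a1 s1'. \<delta> (s1, e) (a1, a2) s1' e')"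
    unfolding particle_sum_def particle_strategy_def by (simp add: sum_distrib_left mult.assoc)
  also have "\<dots> = succ_prob (particle_strategy u2) a1 s1'"
    unfolding succ_prob_def succ_mass_def by (rule particle_sum_sum)
  finally show ?thesis .
qed

lemma bupd_eq_succ_mass:
  "bupd SE obs d1 dE s1 b1 a1 u2 s1'
     = (\<lambda>e'. succ_mass (particle_strategy u2) a1 s1' e' / succ_prob (particle_strategy u2) a1 s1')"
proof
  fix e'
  show "bupd SE obs d1 dE s1 b1 a1 u2 s1' e'
      = succ_mass (particle_strategy u2) a1 s1' e' / succ_prob (particle_strategy u2) a1 s1'"
  proof (cases "e' \<in> SE_of SE obs s1'")
    case True
    have "measure_pmf.expectation b1 (\<lambda>e. \<Sum>a2\<in>UNIV. pmf (u2 (s1, e)) a2 * \<delta> (s1, e) (a1, a2) s1' e')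
        = succ_mass (particle_strategy u2) a1 s1' e'"
      unfolding expectation_b1 succ_mass_def particle_sum_def particle_strategy_def
      by (simp add: sum_distrib_left mult.assoc)
    then show ?thesis using True unfolding bupd_def Pnext_eq_succ_prob by simp
  next
    case False
    then have "\<delta> (s1, sE i) (a1, a2) s1' e' = 0" if "i \<in> {1..nb}" for i a2
      using particle_deltaC_nonzeroD[OF that] by blast
    then show ?thesis using False unfolding bupd_def by (simp add: succ_mass_def particle_sum_def)
  qed
qed

lemma Pnext_mult_Vub_bupd:
  "Pnext SE obs d1 dE s1 b1 a1 u2 s1' * V s1' (bupd SE obs d1 dE s1 b1 a1 u2 s1')
     = succ_value (particle_strategy u2) a1 s1'"
proof -
  let ?p = "particle_strategy u2"
  let ?M = "succ_prob ?p a1 s1'"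
  have p: "?p \<in> particle_strategies nb" by (rule particle_strategy_in_particle_strategies)
  show ?thesis
  proof (cases "?M = 0")
    case True
    then have "\<forall>e\<in>succ_support a1 s1'. succ_mass ?p a1 s1' e = 0"
      using succ_mass_nonneg[OF p] finite_succ_support unfolding succ_prob_def
      by (simp add: sum_nonneg_eq_0_iff)
    then have "succ_value ?p a1 s1' = 0"
      unfolding succ_value_def True by (rule Inf_ub_lp_values_zero[OF finite_Is W_nonneg])
    then show ?thesis using True by (simp add: Pnext_eq_succ_prob)
  next
    case False
    then have "0 < ?M" using succ_prob_nonneg[OF p, of a1 s1'] by linarith
    have "V s1' (\<lambda>e. succ_mass ?p a1 s1' e / ?M)
        = Inf (ub_lp_values W (Is s1') y bk (succ_support a1 s1') (\<lambda>e. succ_mass ?p a1 s1' e / ?M) 1)"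
      using \<open>0 < ?M\<close> succ_mass_nonneg[OF p] succ_mass_eq_0 pmf_bk_eq_0_outside_succ_support
      by (intro Vub_eq_Inf_ub_lp_values finite_succ_support finite_Is L_le_U) auto
    moreover have "succ_value ?p a1 s1'
        = ?M * Inf (ub_lp_values W (Is s1') y bk (succ_support a1 s1') (\<lambda>e. succ_mass ?p a1 s1' e / ?M) 1)"
      unfolding succ_value_def
      by (rule Inf_ub_lp_values_scale[OF \<open>0 < ?M\<close> finite_Is Is_nonempty_if_succ_prob_nonzero[OF False] W_nonneg])
    ultimately show ?thesis by (simp add: Pnext_eq_succ_prob bupd_eq_succ_mass)
  qed
qed

lemma kappa_nonneg: "\<forall>i\<in>{1..nb}. 0 \<le> \<kappa> i"
  using particles by (simp add: less_imp_le)

definition stage_value :: "(nat \<Rightarrow> 'a2 \<Rightarrow> real) \<Rightarrow> 'a1 \<Rightarrow> real" where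
  "stage_value p a1 =
     particle_sum nb \<kappa> sE p (\<lambda>e a2. r (s1, e) (a1, a2)) + \<beta> * (\<Sum>s1'\<in>UNIV. succ_value p a1 s1')"

lemma Top_objective_eq:
  "measure_pmf.expectation b1 (\<lambda>e. \<Sum>a\<in>UNIV. pmf u1 (fst a) * pmf (u2 (s1, e)) (snd a) * r (s1, e) a)
     + \<beta> * (\<Sum>a1\<in>UNIV. \<Sum>s1'\<in>UNIV. pmf u1 a1 * Pnext SE obs d1 dE s1 b1 a1 u2 s1'
                                    * V s1' (bupd SE obs d1 dE s1 b1 a1 u2 s1'))
   = (\<Sum>a1\<in>UNIV. pmf u1 a1 * stage_value (particle_strategy u2) a1)"
proof -
  have pairs: "(\<Sum>a\<in>UNIV. f a) = (\<Sum>a1\<in>UNIV. \<Sum>a2\<in>UNIV. f (a1, a2))" for f :: "'a1 \<times> 'a2 \<Rightarrow> real"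
    by (simp add: sum.cartesian_product)
  have "measure_pmf.expectation b1 (\<lambda>e. \<Sum>a\<in>UNIV. pmf u1 (fst a) * pmf (u2 (s1, e)) (snd a) * r (s1, e) a)
      = (\<Sum>i=1..nb. \<Sum>a1\<in>UNIV. pmf u1 a1 * (\<Sum>a2\<in>UNIV. \<kappa> i * pmf (u2 (s1, sE i)) a2 * r (s1, sE i) (a1, a2)))"
    unfolding expectation_b1 pairs by (simp add: sum_distrib_left mult_ac)
  also have "\<dots> = (\<Sum>a1\<in>UNIV. pmf u1 a1 * particle_sum nb \<kappa> sE (particle_strategy u2) (\<lambda>e a2. r (s1, e) (a1, a2)))"
    unfolding particle_sum_def particle_strategy_def by (subst sum.swap) (simp add: sum_distrib_left)
  finally have reward: "measure_pmf.expectation b1 (\<lambda>e. \<Sum>a\<in>UNIV. pmf u1 (fst a) * pmf (u2 (s1, e)) (snd a) * r (s1, e) a)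
      = (\<Sum>a1\<in>UNIV. pmf u1 a1 * particle_sum nb \<kappa> sE (particle_strategy u2) (\<lambda>e a2. r (s1, e) (a1, a2)))" .
  have "(\<Sum>a1\<in>UNIV. \<Sum>s1'\<in>UNIV. pmf u1 a1 * Pnext SE obs d1 dE s1 b1 a1 u2 s1' * V s1' (bupd SE obs d1 dE s1 b1 a1 u2 s1'))
      = (\<Sum>a1\<in>UNIV. pmf u1 a1 * (\<Sum>s1'\<in>UNIV. succ_value (particle_strategy u2) a1 s1'))"
    by (simp add: mult.assoc Pnext_mult_Vub_bupd sum_distrib_left)
  then show ?thesis
    unfolding reward stage_value_def by (simp add: distrib_left sum.distrib sum_distrib_left mult_ac)
qed

lemma stage_value_cong:
  assumes "\<And>\<Phi>. particle_sum nb \<kappa> sE p \<Phi> = particle_sum nb \<kappa> sE q \<Phi>"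
  shows "stage_value p = stage_value q"
proof -
  have succ_mass_eq: "succ_mass p = succ_mass q" by (simp add: fun_eq_iff succ_mass_def assms)
  show ?thesis
    unfolding fun_eq_iff stage_value_def succ_value_def succ_prob_def succ_mass_eq assms by simp
qed

lemma range_stage_value_particle_strategy:
  "range (\<lambda>u2. stage_value (particle_strategy u2)) = stage_value ` particle_strategies nb"
proof
  show "range (\<lambda>u2. stage_value (particle_strategy u2)) \<subseteq> stage_value ` particle_strategies nb"
    using particle_strategy_in_particle_strategies by blast
  show "stage_value ` particle_strategies nb \<subseteq> range (\<lambda>u2. stage_value (particle_strategy u2))"
  proof
    fix g assume "g \<in> stage_value ` particle_strategies nb"
    then obtain p where p: "p \<in> particle_strategies nb" and g: "g = stage_value p" by blast
    obtain q :: "real^'d \<Rightarrow> 'a2 pmf"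
      where "\<forall>\<Phi>. particle_sum nb \<kappa> sE (\<lambda>i a. pmf (q (sE i)) a) \<Phi> = particle_sum nb \<kappa> sE p \<Phi>"
      using exists_state_strategy_with_same_particle_sums[OF p] particles by blast
    moreover have "particle_strategy (\<lambda>x. q (snd x)) = (\<lambda>i a. pmf (q (sE i)) a)"
      unfolding particle_strategy_def by simp
    ultimately have "g = stage_value (particle_strategy (\<lambda>x. q (snd x)))"
      unfolding g by (metis stage_value_cong)
    then show "g \<in> range (\<lambda>u2. stage_value (particle_strategy u2))" by blast
  qed
qed

lemma succ_value_ge:
  assumes "p \<in> particle_strategies nb"
  shows "- succ_prob p a1 s1' * (\<Sum>k\<in>I. \<bar>y k\<bar>) \<le> succ_value p a1 s1'"
proof -
  have "(\<Sum>k\<in>Is s1'. \<bar>y k\<bar>) \<le> (\<Sum>k\<in>I. \<bar>y k\<bar>)"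
    using I_fin unfolding Iof_def by (intro sum_mono2) auto
  then have "- succ_prob p a1 s1' * (\<Sum>k\<in>I. \<bar>y k\<bar>) \<le> - succ_prob p a1 s1' * (\<Sum>k\<in>Is s1'. \<bar>y k\<bar>)"
    using succ_prob_nonneg[OF assms] by (simp add: mult_left_mono)
  also have "\<dots> \<le> succ_value p a1 s1'"
    unfolding succ_value_def
    by (rule cInf_greatest[OF succ_value_lp_nonempty[OF assms]] ub_lp_values_ge[OF finite_Is W_nonneg])+
  finally show ?thesis .
qed

lemma succ_prob_le:
  assumes "p \<in> particle_strategies nb"
  shows "succ_prob p a1 s1'
    \<le> (\<Sum>i=1..nb. \<Sum>a2\<in>UNIV. \<kappa> i * \<bar>\<Sum>e'\<in>succ_support a1 s1'. \<delta> (s1, sE i) (a1, a2) s1' e'\<bar>)"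
proof -
  have "succ_prob p a1 s1' = particle_sum nb \<kappa> sE p (\<lambda>e a2. \<Sum>e'\<in>succ_support a1 s1'. \<delta> (s1, e) (a1, a2) s1' e')"
    unfolding succ_prob_def succ_mass_def by (rule particle_sum_sum[symmetric])
  also have "\<dots> \<le> \<bar>\<dots>\<bar>" by (rule abs_ge_self)
  also have "\<dots> \<le> (\<Sum>i=1..nb. \<Sum>a2\<in>UNIV. \<kappa> i * \<bar>\<Sum>e'\<in>succ_support a1 s1'. \<delta> (s1, sE i) (a1, a2) s1' e'\<bar>)"
    by (rule particle_sum_abs_le[OF assms kappa_nonneg])
  finally show ?thesis .
qed

lemma stage_value_lower_bound:
  obtains B where "\<And>p a1. p \<in> particle_strategies nb \<Longrightarrow> B \<le> stage_value p a1"
proof -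
  define Y where "Y = (\<Sum>k\<in>I. \<bar>y k\<bar>)"
  define R where "R a1 s1' = (\<Sum>i=1..nb. \<Sum>a2\<in>UNIV. \<kappa> i * \<bar>\<Sum>e'\<in>succ_support a1 s1'. \<delta> (s1, sE i) (a1, a2) s1' e'\<bar>)"
    for a1 s1'
  define B where "B a1 = - (\<Sum>i=1..nb. \<Sum>a2\<in>UNIV. \<kappa> i * \<bar>r (s1, sE i) (a1, a2)\<bar>) - \<beta> * (\<Sum>s1'\<in>UNIV. R a1 s1' * Y)"
    for a1
  have "B a1 \<le> stage_value p a1" if p: "p \<in> particle_strategies nb" for p a1
  proof -
    have "- (\<Sum>i=1..nb. \<Sum>a2\<in>UNIV. \<kappa> i * \<bar>r (s1, sE i) (a1, a2)\<bar>) \<le> particle_sum nb \<kappa> sE p (\<lambda>e a2. r (s1, e) (a1, a2))"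
      using particle_sum_abs_le[OF p kappa_nonneg, of sE "\<lambda>e a2. r (s1, e) (a1, a2)"] by linarith
    moreover have "- (R a1 s1' * Y) \<le> succ_value p a1 s1'" for s1'
    proof -
      have "0 \<le> Y" unfolding Y_def by (simp add: sum_nonneg)
      then have "- (R a1 s1' * Y) \<le> - succ_prob p a1 s1' * Y"
        using succ_prob_le[OF p] unfolding R_def by (simp add: mult_right_mono)
      then show ?thesis using succ_value_ge[OF p, of a1 s1'] unfolding Y_def by linarith
    qed
    then have "- (\<Sum>s1'\<in>UNIV. R a1 s1' * Y) \<le> (\<Sum>s1'\<in>UNIV. succ_value p a1 s1')"
      by (simp add: sum_negf[symmetric] sum_mono)
    then have "- \<beta> * (\<Sum>s1'\<in>UNIV. R a1 s1' * Y) \<le> \<beta> * (\<Sum>s1'\<in>UNIV. succ_value p a1 s1')"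
      using \<beta>_pos by (metis minus_mult_commute mult_le_cancel_left_pos)
    ultimately show ?thesis unfolding B_def stage_value_def by linarith
  qed
  then show thesis by (intro that[of "Min (range B)"]) (meson Min_le finite rangeI order_trans finite_imageI)
qed

lemma stage_value_convex_comb:
  assumes p: "p \<in> particle_strategies nb" and q: "q \<in> particle_strategies nb" and "0 \<le> \<theta>" "\<theta> \<le> 1"
  shows "stage_value (\<lambda>i a. \<theta> * p i a + (1 - \<theta>) * q i a) a1 \<le> \<theta> * stage_value p a1 + (1 - \<theta>) * stage_value q a1"
proof -
  let ?m = "\<lambda>i a. \<theta> * p i a + (1 - \<theta>) * q i a"
  have "succ_mass ?m a1 s1' = (\<lambda>e. \<theta> * succ_mass p a1 s1' e + (1 - \<theta>) * succ_mass q a1 s1' e)" for s1'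
    unfolding succ_mass_def particle_sum_convex_comb ..
  moreover have "succ_prob ?m a1 s1' = \<theta> * succ_prob p a1 s1' + (1 - \<theta>) * succ_prob q a1 s1'" for s1'
    unfolding succ_prob_def succ_mass_def particle_sum_convex_comb by (simp add: sum.distrib sum_distrib_left)
  ultimately have "succ_value ?m a1 s1' \<le> \<theta> * succ_value p a1 s1' + (1 - \<theta>) * succ_value q a1 s1'" for s1'
    unfolding succ_value_def
    using Inf_ub_lp_values_convex[OF finite_Is W_nonneg assms(3,4) succ_value_lp_nonempty[OF p] succ_value_lp_nonempty[OF q]]
    by simp
  then have "(\<Sum>s1'\<in>UNIV. succ_value ?m a1 s1')
      \<le> \<theta> * (\<Sum>s1'\<in>UNIV. succ_value p a1 s1') + (1 - \<theta>) * (\<Sum>s1'\<in>UNIV. succ_value q a1 s1')"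
    by (simp add: sum_mono sum.distrib[symmetric] sum_distrib_left)
  then have "\<beta> * (\<Sum>s1'\<in>UNIV. succ_value ?m a1 s1')
      \<le> \<beta> * (\<theta> * (\<Sum>s1'\<in>UNIV. succ_value p a1 s1') + (1 - \<theta>) * (\<Sum>s1'\<in>UNIV. succ_value q a1 s1'))"
    using \<beta>_pos by (intro mult_left_mono) auto
  then have "\<beta> * (\<Sum>s1'\<in>UNIV. succ_value ?m a1 s1')
      \<le> \<theta> * (\<beta> * (\<Sum>s1'\<in>UNIV. succ_value p a1 s1')) + (1 - \<theta>) * (\<beta> * (\<Sum>s1'\<in>UNIV. succ_value q a1 s1'))"
    by (simp add: algebra_simps)
  then show ?thesis unfolding stage_value_def particle_sum_convex_comb distrib_left by linarith
qed

lemma Top_eq_INF_Max_stage_value: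
  "Top SE obs d1 dE r \<beta> V s1 b1 = (INF p\<in>particle_strategies nb. Max (range (stage_value p)))"
proof -
  obtain B where B: "\<And>p a1. p \<in> particle_strategies nb \<Longrightarrow> B \<le> stage_value p a1"
    using stage_value_lower_bound by blast
  have "Top SE obs d1 dE r \<beta> V s1 b1
      = (SUP u1. INF g\<in>stage_value ` particle_strategies nb. \<Sum>a1\<in>UNIV. pmf u1 a1 * g a1)"
    by (simp only: Top_def Top_objective_eq range_stage_value_particle_strategy[symmetric] image_image)
  also have "\<dots> = (INF g\<in>stage_value ` particle_strategies nb. Max (range g))"
  proof (rule SUP_mixed_INF_eq_INF_Max)
    show "stage_value ` particle_strategies nb \<noteq> {}"
      using particle_strategy_in_particle_strategies by blast
    show "\<exists>f\<in>stage_value ` particle_strategies nb. \<forall>a. f a \<le> \<theta> * g a + (1 - \<theta>) * h a"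
      if "g \<in> stage_value ` particle_strategies nb" "h \<in> stage_value ` particle_strategies nb"
        "0 \<le> \<theta>" "\<theta> \<le> 1" for g h \<theta>
      using that stage_value_convex_comb particle_strategies_convex_comb by blast
  qed (use B in blast)
  finally show ?thesis by (simp only: image_image)
qed

lemma Vub_b1_eq_Inf_ub_lp_values:
  "V s1 (pmf b1) = Inf (ub_lp_values W (Is s1) y bk {e. pmf b1 e + (\<Sum>k\<in>Is s1. pmf (bk k) e) > 0} (pmf b1) 1)"
proof (rule Vub_eq_Inf_ub_lp_values[OF _ finite_Is L_le_U])
  let ?S = "{e. pmf b1 e + (\<Sum>k\<in>Is s1. pmf (bk k) e) > 0}"
  have outside: "pmf b1 e = 0 \<and> (\<forall>k\<in>Is s1. pmf (bk k) e = 0)" if "e \<notin> ?S" for e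
  proof -
    have "0 \<le> (\<Sum>k\<in>Is s1. pmf (bk k) e)" by (simp add: sum_nonneg)
    moreover have "pmf b1 e + (\<Sum>k\<in>Is s1. pmf (bk k) e) \<le> 0" using that by simp
    ultimately have "pmf b1 e = 0" "(\<Sum>k\<in>Is s1. pmf (bk k) e) = 0" using pmf_nonneg[of b1 e] by linarith+
    then show ?thesis using sum_nonneg_eq_0_iff[OF finite_Is[of s1], where f = "\<lambda>k. pmf (bk k) e"] by simp
  qed
  show "finite ?S"
  proof (rule finite_subset)
    show "?S \<subseteq> set_pmf b1 \<union> (\<Union>k\<in>Is s1. set_pmf (bk k))"
    proof
      fix e assume "e \<in> ?S"
      have "pmf b1 e \<noteq> 0 \<or> (\<exists>k\<in>Is s1. pmf (bk k) e \<noteq> 0)"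
      proof (rule ccontr)
        assume "\<not> (pmf b1 e \<noteq> 0 \<or> (\<exists>k\<in>Is s1. pmf (bk k) e \<noteq> 0))"
        then have "pmf b1 e + (\<Sum>k\<in>Is s1. pmf (bk k) e) = 0" by simp
        with \<open>e \<in> ?S\<close> show False by simp
      qed
      then show "e \<in> set_pmf b1 \<union> (\<Union>k\<in>Is s1. set_pmf (bk k))" by (auto simp: set_pmf_iff)
    qed
    show "finite (set_pmf b1 \<union> (\<Union>k\<in>Is s1. set_pmf (bk k)))"
    proof (intro finite_UnI finite_UN_I finite_Is)
      show "finite (set_pmf b1)" unfolding set_pmf_b1 by simp
      show "finite (set_pmf (bk k))" if "k \<in> Is s1" for k using Ups_beliefs that unfolding Iof_def by blast
    qed
  qed
  show "pmf b1 e = 0" if "e \<notin> ?S" for e using outside[OF that] by blast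
  show "pmf (bk k) e = 0" if "k \<in> Is s1" "e \<notin> ?S" for k e using outside[OF that(2)] that(1) by blast
qed simp

definition lp_objective :: "(nat \<Rightarrow> 'a2 \<Rightarrow> real) \<Rightarrow> ('loc \<times> 'per \<Rightarrow> 'k \<Rightarrow> real)
    \<Rightarrow> ('loc \<times> 'per \<Rightarrow> real^'d \<Rightarrow> real) \<Rightarrow> 'a1 \<Rightarrow> real" where
  "lp_objective p lam c a1 = particle_sum nb \<kappa> sE p (\<lambda>e a2. r (s1, e) (a1, a2))
     + \<beta> * (\<Sum>s1'\<in>UNIV. (\<Sum>k\<in>Is s1'. lam s1' k * y k) + W * (\<Sum>e'\<in>succ_support a1 s1'. c s1' e'))"

definition lp_values :: "real set" where
  "lp_values = {v | v c lam p. p \<in> particle_strategies nb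
     \<and> (\<forall>a1 s1'. ub_lp_feasible (Is s1') bk (succ_support a1 s1') (succ_mass p a1 s1') (succ_prob p a1 s1')
                   (lam a1 s1') (c a1 s1'))
     \<and> (\<forall>a1. lp_objective p (lam a1) (c a1) a1 \<le> v)}"

lemma lp_valuesI:
  assumes "p \<in> particle_strategies nb"
    and "\<forall>a1 s1'. ub_lp_feasible (Is s1') bk (succ_support a1 s1') (succ_mass p a1 s1') (succ_prob p a1 s1')
                   (lam a1 s1') (c a1 s1')"
    and "\<forall>a1. lp_objective p (lam a1) (c a1) a1 \<le> v"
  shows "v \<in> lp_values"
  using assms unfolding lp_values_def
  by (intro CollectI exI[of _ v] exI[of _ c] exI[of _ lam] exI[of _ p]) simp

lemma stage_value_le_lp_objective:
  assumes "\<forall>s1'. ub_lp_feasible (Is s1') bk (succ_support a1 s1') (succ_mass p a1 s1') (succ_prob p a1 s1')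
                  (lam s1') (c s1')"
  shows "stage_value p a1 \<le> lp_objective p lam c a1"
proof -
  have "succ_value p a1 s1' \<le> (\<Sum>k\<in>Is s1'. lam s1' k * y k) + W * (\<Sum>e'\<in>succ_support a1 s1'. c s1' e')" for s1'
    unfolding succ_value_def
    using cInf_lower[OF ub_lp_valuesI bdd_below_ub_lp_values[OF finite_Is W_nonneg]] assms by blast
  then have "(\<Sum>s1'\<in>UNIV. succ_value p a1 s1')
      \<le> (\<Sum>s1'\<in>UNIV. (\<Sum>k\<in>Is s1'. lam s1' k * y k) + W * (\<Sum>e'\<in>succ_support a1 s1'. c s1' e'))"
    by (rule sum_mono)
  then show ?thesis
    unfolding stage_value_def lp_objective_def using \<beta>_pos by (intro add_left_mono mult_left_mono) auto
qed

lemma exists_near_optimal_succ_lp: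
  assumes p: "p \<in> particle_strategies nb" and "0 < \<eta>"
  shows "\<exists>lam c. ub_lp_feasible (Is s1') bk (succ_support a1 s1') (succ_mass p a1 s1') (succ_prob p a1 s1') lam c
           \<and> (\<Sum>k\<in>Is s1'. lam k * y k) + W * (\<Sum>e'\<in>succ_support a1 s1'. c e') < succ_value p a1 s1' + \<eta>"
proof -
  obtain x where "x \<in> ub_lp_values W (Is s1') y bk (succ_support a1 s1') (succ_mass p a1 s1') (succ_prob p a1 s1')"
    and "x < succ_value p a1 s1' + \<eta>"
    using cInf_less_iff[OF succ_value_lp_nonempty[OF p] bdd_below_ub_lp_values[OF finite_Is W_nonneg]]
      \<open>0 < \<eta>\<close> unfolding succ_value_def by (meson less_add_same_cancel1)
  then show ?thesis unfolding ub_lp_values_def by blast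
qed

lemma exists_lp_objective_near_stage_value:
  assumes p: "p \<in> particle_strategies nb" and "0 < \<epsilon>"
  shows "\<exists>lam c. \<forall>a1.
           (\<forall>s1'. ub_lp_feasible (Is s1') bk (succ_support a1 s1') (succ_mass p a1 s1') (succ_prob p a1 s1')
                    (lam a1 s1') (c a1 s1'))
         \<and> lp_objective p (lam a1) (c a1) a1 \<le> stage_value p a1 + \<epsilon>"
proof -
  define N where "N = real CARD('loc \<times> 'per)"
  have "0 < N" unfolding N_def by simp
  define Q where "Q a1 s1' lc \<longleftrightarrow>
      ub_lp_feasible (Is s1') bk (succ_support a1 s1') (succ_mass p a1 s1') (succ_prob p a1 s1') (fst lc) (snd lc)
      \<and> (\<Sum>k\<in>Is s1'. fst lc k * y k) + W * (\<Sum>e'\<in>succ_support a1 s1'. snd lc e') < succ_value p a1 s1' + \<epsilon> / N"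
    for a1 s1' lc
  have "\<exists>lc. Q a1 s1' lc" for a1 s1'
    using exists_near_optimal_succ_lp[OF p divide_pos_pos[OF \<open>0 < \<epsilon>\<close> \<open>0 < N\<close>]]
    unfolding Q_def by fastforce
  then have Q: "Q a1 s1' (SOME lc. Q a1 s1' lc)" for a1 s1' by (rule someI_ex)
  define lam where "lam a1 s1' = fst (SOME lc. Q a1 s1' lc)" for a1 s1'
  define c where "c a1 s1' = snd (SOME lc. Q a1 s1' lc)" for a1 s1'
  have "lp_objective p (lam a1) (c a1) a1 \<le> stage_value p a1 + \<epsilon>" for a1
  proof -
    have "(\<Sum>s1'\<in>UNIV. (\<Sum>k\<in>Is s1'. lam a1 s1' k * y k) + W * (\<Sum>e'\<in>succ_support a1 s1'. c a1 s1' e'))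
        \<le> (\<Sum>s1'\<in>UNIV. succ_value p a1 s1' + \<epsilon> / N)"
      using Q unfolding Q_def lam_def c_def by (intro sum_mono) (simp add: less_imp_le)
    also have "\<dots> = (\<Sum>s1'\<in>UNIV. succ_value p a1 s1') + \<epsilon>"
      using \<open>0 < N\<close> by (simp add: sum.distrib N_def)
    finally have "\<beta> * (\<Sum>s1'\<in>UNIV. (\<Sum>k\<in>Is s1'. lam a1 s1' k * y k) + W * (\<Sum>e'\<in>succ_support a1 s1'. c a1 s1' e'))
        \<le> \<beta> * (\<Sum>s1'\<in>UNIV. succ_value p a1 s1') + \<beta> * \<epsilon>"
      using \<beta>_pos by (simp add: distrib_left[symmetric])
    moreover have "\<beta> * \<epsilon> \<le> \<epsilon>" using \<beta>_lt1 \<open>0 < \<epsilon>\<close> by simp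
    ultimately show ?thesis unfolding lp_objective_def stage_value_def by linarith
  qed
  moreover have "ub_lp_feasible (Is s1') bk (succ_support a1 s1') (succ_mass p a1 s1') (succ_prob p a1 s1')
                   (lam a1 s1') (c a1 s1')" for a1 s1'
    using Q unfolding Q_def lam_def c_def by blast
  ultimately show ?thesis by (intro exI[of _ lam] exI[of _ c]) blast
qed

lemma Inf_lp_values: "Inf lp_values = (INF p\<in>particle_strategies nb. Max (range (stage_value p)))"
proof (rule cInf_eq_if_approximating)
  show "\<exists>b\<in>(\<lambda>p. Max (range (stage_value p))) ` particle_strategies nb. b \<le> v" if v_mem: "v \<in> lp_values" for v
  proof -
    obtain p lam c where "p \<in> particle_strategies nb"
      and feas: "\<forall>a1 s1'. ub_lp_feasible (Is s1') bk (succ_support a1 s1') (succ_mass p a1 s1') (succ_prob p a1 s1')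
                   (lam a1 s1') (c a1 s1')"
      and obj: "\<forall>a1. lp_objective p (lam a1) (c a1) a1 \<le> v"
      using v_mem unfolding lp_values_def by blast
    have "stage_value p a1 \<le> v" for a1
      using order_trans[OF stage_value_le_lp_objective obj[rule_format, of a1]] feas by blast
    then have "Max (range (stage_value p)) \<le> v" by simp
    then show ?thesis using \<open>p \<in> particle_strategies nb\<close> by blast
  qed
  show "\<exists>v\<in>lp_values. v \<le> b + \<epsilon>"
    if b_mem: "b \<in> (\<lambda>p. Max (range (stage_value p))) ` particle_strategies nb" and "0 < \<epsilon>" for b \<epsilon>
  proof -
    obtain p where p: "p \<in> particle_strategies nb" and b: "b = Max (range (stage_value p))"
      using b_mem by blast
    obtain lam c where near: "\<forall>a1.
           (\<forall>s1'. ub_lp_feasible (Is s1') bk (succ_support a1 s1') (succ_mass p a1 s1') (succ_prob p a1 s1')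
                    (lam a1 s1') (c a1 s1'))
         \<and> lp_objective p (lam a1) (c a1) a1 \<le> stage_value p a1 + \<epsilon>"
      using exists_lp_objective_near_stage_value[OF p \<open>0 < \<epsilon>\<close>] by blast
    have "stage_value p a1 \<le> b" for a1 unfolding b by simp
    then have "lp_objective p (lam a1) (c a1) a1 \<le> b + \<epsilon>" for a1
      using near[rule_format, of a1] by (meson add_right_mono order_trans)
    then have "b + \<epsilon> \<in> lp_values"
      using p near by (intro lp_valuesI) auto
    then show ?thesis by blast
  qed
  obtain B where "\<And>p a1. p \<in> particle_strategies nb \<Longrightarrow> B \<le> stage_value p a1"
    using stage_value_lower_bound by blast
  then show "bdd_below ((\<lambda>p. Max (range (stage_value p))) ` particle_strategies nb)"
    by (intro bdd_belowI2[where m = B]) (meson Max_ge finite rangeI finite_imageI order_trans)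
qed

lemma lp_values_eq:
  "lp_values = {v | v c lam p.
              (\<forall>a1. v \<ge> (\<Sum>i=1..nb. \<Sum>a2\<in>UNIV. \<kappa> i * p i a2 * r (s1, sE i) (a1, a2))
                        + \<beta> * (\<Sum>s1'\<in>UNIV. \<Sum>k\<in>Is s1'. lam a1 s1' k * y k)
                        + \<beta> * (U - L) / 2 * (\<Sum>s1'\<in>UNIV. \<Sum>e'\<in>succ_support a1 s1'. c a1 s1' e'))
            \<and> (\<forall>a1 s1'. \<forall>e'\<in>succ_support a1 s1'. c a1 s1' e' \<ge>
                  \<bar>(\<Sum>i=1..nb. \<Sum>a2\<in>UNIV. \<kappa> i * p i a2 * \<delta> (s1, sE i) (a1, a2) s1' e')
                   - (\<Sum>k\<in>Is s1'. lam a1 s1' k * pmf (bk k) e')\<bar>)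
            \<and> (\<forall>a1 s1'. (\<Sum>k\<in>Is s1'. lam a1 s1' k) =
                  (\<Sum>i=1..nb. \<Sum>a2\<in>UNIV. \<Sum>\<^sub>\<infinity>e''\<in>SE. \<kappa> i * p i a2 * \<delta> (s1, sE i) (a1, a2) s1' e''))
            \<and> (\<forall>a1 s1'. \<forall>k\<in>Is s1'. lam a1 s1' k \<ge> 0)
            \<and> (\<forall>i\<in>{1..nb}. \<forall>a2. p i a2 \<ge> 0)
            \<and> (\<forall>i\<in>{1..nb}. (\<Sum>a2\<in>UNIV. p i a2) = 1)}"
proof -
  have objective: "(\<Sum>i=1..nb. \<Sum>a2\<in>UNIV. \<kappa> i * p i a2 * r (s1, sE i) (a1, a2))
        + \<beta> * (\<Sum>s1'\<in>UNIV. \<Sum>k\<in>Is s1'. lam s1' k * y k)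
        + \<beta> * (U - L) / 2 * (\<Sum>s1'\<in>UNIV. \<Sum>e'\<in>succ_support a1 s1'. c s1' e')
      = lp_objective p lam c a1" for p lam c a1
    unfolding lp_objective_def particle_sum_def
    by (simp add: sum.distrib sum_distrib_left[symmetric] sum_divide_distrib[symmetric] distrib_left mult.assoc)
  have mass: "(\<Sum>i=1..nb. \<Sum>a2\<in>UNIV. \<kappa> i * p i a2 * \<delta> (s1, sE i) (a1, a2) s1' e') = succ_mass p a1 s1' e'"
    for p a1 s1' e'
    unfolding succ_mass_def particle_sum_def ..
  have prob: "(\<Sum>i=1..nb. \<Sum>a2\<in>UNIV. \<Sum>\<^sub>\<infinity>e''\<in>SE. \<kappa> i * p i a2 * \<delta> (s1, sE i) (a1, a2) s1' e'')
      = succ_prob p a1 s1'" for p a1 s1'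
  proof -
    have "(\<Sum>i=1..nb. \<Sum>a2\<in>UNIV. \<Sum>\<^sub>\<infinity>e''\<in>SE. \<kappa> i * p i a2 * \<delta> (s1, sE i) (a1, a2) s1' e'')
        = particle_sum nb \<kappa> sE p (\<lambda>e a2. \<Sum>e'\<in>succ_support a1 s1'. \<delta> (s1, e) (a1, a2) s1' e')"
      unfolding particle_sum_def
      by (intro sum.cong refl) (simp add: infsum_particle_deltaC sum_distrib_left)
    then show ?thesis unfolding succ_prob_def succ_mass_def particle_sum_sum .
  qed
  show ?thesis
    unfolding lp_values_def objective mass prob ub_lp_feasible_def particle_strategies_def mem_Collect_eq
    by (intro Collect_cong ex_cong1) blast
qed

lemma Top_eq_Inf_lp:
  "Top SE obs d1 dE r \<beta> V s1 b1 = Inf {v | v c lam p.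
              (\<forall>a1. v \<ge> (\<Sum>i=1..nb. \<Sum>a2\<in>UNIV. \<kappa> i * p i a2 * r (s1, sE i) (a1, a2))
                        + \<beta> * (\<Sum>s1'\<in>UNIV. \<Sum>k\<in>Is s1'. lam a1 s1' k * y k)
                        + \<beta> * (U - L) / 2 * (\<Sum>s1'\<in>UNIV. \<Sum>e'\<in>succ_support a1 s1'. c a1 s1' e'))
            \<and> (\<forall>a1 s1'. \<forall>e'\<in>succ_support a1 s1'. c a1 s1' e' \<ge>
                  \<bar>(\<Sum>i=1..nb. \<Sum>a2\<in>UNIV. \<kappa> i * p i a2 * \<delta> (s1, sE i) (a1, a2) s1' e')
                   - (\<Sum>k\<in>Is s1'. lam a1 s1' k * pmf (bk k) e')\<bar>)
            \<and> (\<forall>a1 s1'. (\<Sum>k\<in>Is s1'. lam a1 s1' k) =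
                  (\<Sum>i=1..nb. \<Sum>a2\<in>UNIV. \<Sum>\<^sub>\<infinity>e''\<in>SE. \<kappa> i * p i a2 * \<delta> (s1, sE i) (a1, a2) s1' e''))
            \<and> (\<forall>a1 s1'. \<forall>k\<in>Is s1'. lam a1 s1' k \<ge> 0)
            \<and> (\<forall>i\<in>{1..nb}. \<forall>a2. p i a2 \<ge> 0)
            \<and> (\<forall>i\<in>{1..nb}. (\<Sum>a2\<in>UNIV. p i a2) = 1)}"
  unfolding Top_eq_INF_Max_stage_value Inf_lp_values[symmetric] lp_values_eq ..

end

theorem mainTheorem4:
  fixes SE :: "(real^'d) set"
    and obs :: "'loc::finite \<Rightarrow> (real^'d) \<Rightarrow> 'per::finite"
    and d1 :: "'loc \<times> 'per \<Rightarrow> 'a1::finite \<times> 'a2::finite \<Rightarrow> 'loc pmf"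
    and dE :: "'loc \<Rightarrow> (real^'d) \<Rightarrow> 'a1 \<times> 'a2 \<Rightarrow> (real^'d) pmf"
    and r :: "('loc \<times> 'per) \<times> (real^'d) \<Rightarrow> 'a1 \<times> 'a2 \<Rightarrow> real"
    and \<beta> :: real
    and I :: "'k set" and s1k :: "'k \<Rightarrow> 'loc \<times> 'per" and bk :: "'k \<Rightarrow> (real^'d) pmf"
    and y :: "'k \<Rightarrow> real"
    and s1 :: "'loc \<times> 'per" and b1 :: "(real^'d) pmf"
    and nb :: nat and sE :: "nat \<Rightarrow> (real^'d)" and \<kappa> :: "nat \<Rightarrow> real"
  defines "L \<equiv> lowL (states SE obs) r \<beta>"
    and "U \<equiv> upU (states SE obs) r \<beta>"
    and "\<delta> \<equiv> deltaC obs d1 dE"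
    and "Is \<equiv> Iof I s1k"
    and "V \<equiv> Vub (lowL (states SE obs) r \<beta>) (upU (states SE obs) r \<beta>) I s1k bk y"
    and "SEplus \<equiv> {e. pmf b1 e + (\<Sum>k\<in>Iof I s1k s1. pmf (bk k) e) > 0}"
    and "SEa \<equiv> (\<lambda>a1 s1'. {e' \<in> SE. (\<exists>i\<in>{1..nb}. \<exists>a2. deltaC obs d1 dE (s1, sE i) (a1, a2) s1' e' > 0)
                                  \<or> (\<exists>k\<in>Iof I s1k s1'. pmf (bk k) e' > 0)})"
  assumes SE_closed: "closed SE"
    and dE_fin: "\<forall>l e a. e \<in> SE \<longrightarrow> finite (set_pmf (dE l e a)) \<and> set_pmf (dE l e a) \<subseteq> SE"
    and r_bounded: "bounded (case_prod r ` (states SE obs \<times> UNIV))"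
    and \<beta>_pos: "0 < \<beta>" and \<beta>_lt1: "\<beta> < 1"
    and I_fin: "finite I"
    and Ups_beliefs: "\<forall>k\<in>I. finite (set_pmf (bk k)) \<and> set_pmf (bk k) \<subseteq> SE_of SE obs (s1k k)"
    and Ups_cover: "\<forall>s. SE_of SE obs s \<noteq> {} \<longrightarrow> Is s \<noteq> {}"
    and particles: "\<forall>i\<in>{1..nb}. 0 < \<kappa> i \<and> sE i \<in> SE"
    and weights_norm: "(\<Sum>i=1..nb. \<kappa> i) = 1"
    and b1_particles: "\<forall>x. pmf b1 x = (\<Sum>i\<in>{i\<in>{1..nb}. sE i = x}. \<kappa> i)"
    and b1_belief: "set_pmf b1 \<subseteq> SE_of SE obs s1"
  shows "V s1 (pmf b1) =
           Inf {(\<Sum>k\<in>Is s1. lam k * y k) + (U - L) / 2 * (\<Sum>e\<in>SEplus. c e)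
                | lam c. (\<forall>e\<in>SEplus. c e \<ge> \<bar>pmf b1 e - (\<Sum>k\<in>Is s1. lam k * pmf (bk k) e)\<bar>)
                         \<and> (\<forall>k\<in>Is s1. lam k \<ge> 0) \<and> (\<Sum>k\<in>Is s1. lam k) = 1}
       \<and> Top SE obs d1 dE r \<beta> V s1 b1 =
           Inf {v | v c lam p.
              (\<forall>a1. v \<ge> (\<Sum>i=1..nb. \<Sum>a2\<in>UNIV. \<kappa> i * p i a2 * r (s1, sE i) (a1, a2))
                        + \<beta> * (\<Sum>s1'\<in>UNIV. \<Sum>k\<in>Is s1'. lam a1 s1' k * y k)
                        + \<beta> * (U - L) / 2 * (\<Sum>s1'\<in>UNIV. \<Sum>e'\<in>SEa a1 s1'. c a1 s1' e'))
            \<and> (\<forall>a1 s1'. \<forall>e'\<in>SEa a1 s1'. c a1 s1' e' \<ge>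
                  \<bar>(\<Sum>i=1..nb. \<Sum>a2\<in>UNIV. \<kappa> i * p i a2 * \<delta> (s1, sE i) (a1, a2) s1' e')
                   - (\<Sum>k\<in>Is s1'. lam a1 s1' k * pmf (bk k) e')\<bar>)
            \<and> (\<forall>a1 s1'. (\<Sum>k\<in>Is s1'. lam a1 s1' k) =
                  (\<Sum>i=1..nb. \<Sum>a2\<in>UNIV. \<Sum>\<^sub>\<infinity>e''\<in>SE. \<kappa> i * p i a2 * \<delta> (s1, sE i) (a1, a2) s1' e''))
            \<and> (\<forall>a1 s1'. \<forall>k\<in>Is s1'. lam a1 s1' k \<ge> 0)
            \<and> (\<forall>i\<in>{1..nb}. \<forall>a2. p i a2 \<ge> 0)
            \<and> (\<forall>i\<in>{1..nb}. (\<Sum>a2\<in>UNIV. p i a2) = 1)}"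
proof -
  interpret particle_belief_game SE obs d1 dE r \<beta> I s1k bk y s1 b1 nb sE \<kappa>
    by unfold_locales
      (use dE_fin r_bounded \<beta>_pos \<beta>_lt1 I_fin Ups_beliefs Ups_cover[unfolded Is_def] particles
         b1_particles b1_belief in blast)+
  have "SEa = succ_support"
    unfolding SEa_def by (intro ext) (simp add: succ_support_def)
  then show ?thesis
    using Vub_b1_eq_Inf_ub_lp_values Top_eq_Inf_lp
    unfolding L_def U_def \<delta>_def Is_def V_def SEplus_def ub_lp_values_def ub_lp_feasible_def
    by (intro conjI) simp_all
qed

end
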